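(* Let $\alpha\in(0,1)$ be a constant, $k\ge1$ and $\epsilon\in(0,1)$. Suppose it is promised that $p_i\le \epsilon^2/n^\alpha$ for all $i\in[n]$. Then there is a randomized one-pass streaming algorithm (strict turnstile model, constant success probability) that uses $\tilde O\left(n^{1-\alpha}\cdot k\cdot\log(n/\epsilon)\right)$ space and outputs $f\in H_k$ such that $err_P(f)\le\min_{f^*\in H_k}err_P(f^* )+\epsilon$.
   Context: Strict turnstile model: the stream consists of insertions and deletions of elements of $[n]=\{1,\dots,n\}$ such that at every point each element has been inserted at least as many times as it has been deleted; the stream length is polynomial in $n$. Let $m_i\ge 0$ be the final count of $i$, $m=\sum_i m_i>0$, and $P=(p_1,\dots,p_n)$ with $p_i=m_i/m$; $\mathrm{supp}(P)=\{i:p_i>0\}$. A $k$-piece histogram is a function $f:[n]\to[0,1]$ given by delimiters $0=i_0\le i_1\le\dots\le i_{k-1}\le i_k=n$ and values $\gamma_1,\dots,\gamma_k\in[0,1]$, with $f(i)=\gamma_j$ for $i\in\{i_{j-1}+1,\dots,i_j\}$. $H_k$ is the set of all $k$-piece histograms over $[n]$. The support-aware $L_1$ error is $err_P(f)=\sum_{i\in\mathrm{supp}(P)}|p_i-f(i)|$. $\tilde O$ hides factors polylogarithmic in its argument. *)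

theory Defs
  imports "HOL-Probability.Probability"
begin

text \<open>A stream update is a pair (item, is_insertion). True = insertion, False = deletion.\<close>
type_synonym update = "nat \<times> bool"

definition cnt :: "update list \<Rightarrow> nat \<Rightarrow> int" where
  "cnt s i = int (length (filter (\<lambda>u. u = (i, True)) s))
           - int (length (filter (\<lambda>u. u = (i, False)) s))"

definition valid_stream :: "nat \<Rightarrow> update list \<Rightarrow> bool" where
  "valid_stream n s \<longleftrightarrow> (\<forall>u\<in>set s. fst u \<in> {1..n})
      \<and> (\<forall>j\<le>length s. \<forall>i. 0 \<le> cnt (take j s) i)"

definition mtot :: "nat \<Rightarrow> update list \<Rightarrow> int" where
  "mtot n s = (\<Sum>i=1..n. cnt s i)"

definition pvec :: "nat \<Rightarrow> update list \<Rightarrow> nat \<Rightarrow> real" where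
  "pvec n s i = real_of_int (cnt s i) / real_of_int (mtot n s)"

definition hist_set :: "nat \<Rightarrow> nat \<Rightarrow> (nat \<Rightarrow> real) set" where
  "hist_set n k = {f. (\<exists>(d::nat \<Rightarrow> nat) (g::nat \<Rightarrow> real).
        d 0 = 0 \<and> d k = n \<and> (\<forall>j<k. d j \<le> d (Suc j))
        \<and> (\<forall>j\<in>{1..k}. 0 \<le> g j \<and> g j \<le> 1)
        \<and> (\<forall>j\<in>{1..k}. \<forall>x\<in>{d (j - 1) + 1 .. d j}. f x = g j))
      \<and> (\<forall>x. x \<notin> {1..n} \<longrightarrow> f x = 0)}"

definition err :: "nat \<Rightarrow> (nat \<Rightarrow> real) \<Rightarrow> (nat \<Rightarrow> real) \<Rightarrow> real" where
  "err n P f = (\<Sum>i\<in>{i\<in>{1..n}. 0 < P i}. \<bar>P i - f i\<bar>)"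

definition opt_err :: "nat \<Rightarrow> nat \<Rightarrow> (nat \<Rightarrow> real) \<Rightarrow> real" where
  "opt_err n k P = Inf (err n P ` hist_set n k)"

record salg =
  s_init :: "bool list pmf"
  s_upd  :: "update \<Rightarrow> bool list \<Rightarrow> bool list pmf"
  s_out  :: "bool list \<Rightarrow> (nat \<Rightarrow> real) pmf"

definition run :: "salg \<Rightarrow> update list \<Rightarrow> bool list pmf" where
  "run A s = foldl (\<lambda>M u. bind_pmf M (s_upd A u)) (s_init A) s"

definition alg_output :: "salg \<Rightarrow> update list \<Rightarrow> (nat \<Rightarrow> real) pmf" where
  "alg_output A s = bind_pmf (run A s) (s_out A)"

text \<open>Space: every memory state reachable with positive probability on any valid stream
  of length at most L has at most S bits (prefixes of valid streams are valid).\<close>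
definition space_bounded :: "salg \<Rightarrow> nat \<Rightarrow> nat \<Rightarrow> real \<Rightarrow> bool" where
  "space_bounded A n L S \<longleftrightarrow> (\<forall>s. valid_stream n s \<and> length s \<le> L \<longrightarrow>
      (\<forall>\<sigma>\<in>set_pmf (run A s). real (length \<sigma>) \<le> S))"

end

theory Submission
  imports Defs
begin

text \<open>Before reading the stream the algorithm draws \<open>t = O(k log n)\<close> independent blocks of
  \<open>m = O(n^(1-\<alpha>))\<close> uniformly random items; it then maintains the exact insertion and deletion
  counts of the sampled items together with the total mass. For a histogram \<open>f\<close>, the average of
  \<open>n |p a - f a|\<close> (over \<open>p a > 0\<close>) over a block is an unbiased estimate of \<open>err P f\<close>. Since
  every \<open>p a \<le> \<epsilon>^2/n^\<alpha>\<close>, Chebyshev's inequality makes a block accurate with probability 15/16,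
  and the median over the blocks fails with probability \<open>2^-t\<close>. Only histograms with values on
  a grid of mesh \<open>\<epsilon>/(8n)\<close> below \<open>\<epsilon>^2/n^\<alpha>\<close> are considered; there are \<open>(n+1)^O(k)\<close> of them,
  so by a union bound all medians are accurate with probability 2/3, and rounding an optimal
  histogram to the grid costs at most \<open>\<epsilon>/8\<close>. Hence the candidate with least median estimate is
  \<open>\<epsilon>\<close>-optimal. The state consists of \<open>O(tm)\<close> numbers of \<open>O(d log n)\<close> bits each.\<close>

subsection \<open>Fixed-width binary encoding of lists of naturals\<close>

fun nat_of_bits :: "bool list \<Rightarrow> nat" where
  "nat_of_bits [] = 0"
| "nat_of_bits (b # bs) = of_bool b + 2 * nat_of_bits bs"

definition bits_of_nat :: "nat \<Rightarrow> nat \<Rightarrow> bool list" where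
  "bits_of_nat w x = map (bit x) [0..<w]"

lemma bits_of_nat_Suc: "bits_of_nat (Suc w) x = odd x # bits_of_nat w (x div 2)"
  unfolding bits_of_nat_def by (simp add: map_upt_Suc bit_Suc bit_0 del: upt_Suc)

lemma length_bits_of_nat [simp]: "length (bits_of_nat w x) = w"
  by (simp add: bits_of_nat_def)

lemma nat_of_bits_of_nat: "x < 2 ^ w \<Longrightarrow> nat_of_bits (bits_of_nat w x) = x"
proof (induction w arbitrary: x)
  case 0
  then show ?case by (simp add: bits_of_nat_def)
next
  case (Suc w)
  then have "x div 2 < 2 ^ w" by auto
  then show ?case using Suc.IH by (simp add: bits_of_nat_Suc)
qed

function chunks :: "nat \<Rightarrow> 'a list \<Rightarrow> 'a list list" where
  "chunks m xs = (if m = 0 \<or> xs = [] then [] else take m xs # chunks m (drop m xs))"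
  by auto
termination by (relation "Wellfounded.measure (\<lambda>(m, xs). length xs)") auto

declare chunks.simps [simp del]

lemma chunks_concat:
  "0 < m \<Longrightarrow> \<forall>zs\<in>set zss. length zs = m \<Longrightarrow> chunks m (concat zss) = zss"
proof (induction zss)
  case Nil
  then show ?case by (simp add: chunks.simps)
next
  case (Cons zs zss)
  then have "zs \<noteq> []" by auto
  with Cons show ?case by (subst chunks.simps) auto
qed

definition encode_nats :: "nat \<Rightarrow> nat list \<Rightarrow> bool list" where
  "encode_nats w xs = concat (map (bits_of_nat w) xs)"

definition decode_nats :: "nat \<Rightarrow> bool list \<Rightarrow> nat list" where
  "decode_nats w \<sigma> = map nat_of_bits (chunks w \<sigma>)"

lemma length_encode_nats [simp]: "length (encode_nats w xs) = w * length xs"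
  by (induction xs) (auto simp: encode_nats_def)

lemma decode_encode_nats:
  assumes "0 < w" "\<forall>x\<in>set xs. x < 2 ^ w"
  shows "decode_nats w (encode_nats w xs) = xs"
proof -
  have "chunks w (encode_nats w xs) = map (bits_of_nat w) xs"
    unfolding encode_nats_def using assms(1) by (intro chunks_concat) auto
  then show ?thesis
    using assms(2) by (simp add: decode_nats_def nat_of_bits_of_nat map_idI)
qed

subsection \<open>Algorithms that maintain a sketch\<close>

definition sketch_alg :: "nat \<Rightarrow> 'a pmf \<Rightarrow> ('a \<Rightarrow> nat list) \<Rightarrow> (update \<Rightarrow> nat list \<Rightarrow> nat list)
    \<Rightarrow> (nat list \<Rightarrow> nat \<Rightarrow> real) \<Rightarrow> salg" where
  "sketch_alg w \<Omega> init upd out =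
    \<lparr> s_init = map_pmf (\<lambda>\<omega>. encode_nats w (init \<omega>)) \<Omega>,
      s_upd = (\<lambda>u \<sigma>. return_pmf (encode_nats w (upd u (decode_nats w \<sigma>)))),
      s_out = (\<lambda>\<sigma>. return_pmf (out (decode_nats w \<sigma>))) \<rparr>"

text \<open>The memory holds the sketch \<open>sk \<omega> s\<close> of the stream read so far, \<open>w\<close> bits per entry; all
  randomness is in the seed \<open>\<omega>\<close>, drawn before the stream.\<close>

locale sketch =
  fixes w L :: nat and \<Omega> :: "'a pmf" and sk :: "'a \<Rightarrow> update list \<Rightarrow> nat list"
    and upd :: "update \<Rightarrow> nat list \<Rightarrow> nat list"
  assumes width_pos: "0 < w"
    and sk_snoc: "\<And>\<omega> s u. sk \<omega> (s @ [u]) = upd u (sk \<omega> s)"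
    and sk_fits: "\<And>\<omega> s. \<omega> \<in> set_pmf \<Omega> \<Longrightarrow> length s \<le> L \<Longrightarrow> \<forall>x\<in>set (sk \<omega> s). x < 2 ^ w"
begin

abbreviation alg :: "(nat list \<Rightarrow> nat \<Rightarrow> real) \<Rightarrow> salg" where
  "alg out \<equiv> sketch_alg w \<Omega> (\<lambda>\<omega>. sk \<omega> []) upd out"

lemma decode_encode_sk:
  "\<omega> \<in> set_pmf \<Omega> \<Longrightarrow> length s \<le> L \<Longrightarrow> decode_nats w (encode_nats w (sk \<omega> s)) = sk \<omega> s"
  using decode_encode_nats width_pos sk_fits by blast

lemma run_sketch_alg: "length s \<le> L \<Longrightarrow> run (alg out) s = map_pmf (\<lambda>\<omega>. encode_nats w (sk \<omega> s)) \<Omega>"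
proof (induction s rule: rev_induct)
  case Nil
  then show ?case by (simp add: run_def sketch_alg_def)
next
  case (snoc u s)
  have "run (alg out) (s @ [u]) = map_pmf (\<lambda>\<omega>. encode_nats w (sk \<omega> s)) \<Omega> \<bind>
      (\<lambda>\<sigma>. return_pmf (encode_nats w (upd u (decode_nats w \<sigma>))))"
    using snoc by (simp add: run_def sketch_alg_def)
  also have "\<dots> = map_pmf (\<lambda>\<omega>. encode_nats w (upd u (decode_nats w (encode_nats w (sk \<omega> s))))) \<Omega>"
    by (simp add: map_pmf_def bind_assoc_pmf bind_return_pmf)
  also have "\<dots> = map_pmf (\<lambda>\<omega>. encode_nats w (sk \<omega> (s @ [u]))) \<Omega>"
    using snoc.prems by (intro pmf.map_cong refl) (simp add: decode_encode_sk sk_snoc)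
  finally show ?case .
qed

lemma alg_output_sketch_alg: "length s \<le> L \<Longrightarrow> alg_output (alg out) s = map_pmf (\<lambda>\<omega>. out (sk \<omega> s)) \<Omega>"
  unfolding alg_output_def run_sketch_alg
  by (simp add: map_pmf_def bind_assoc_pmf bind_return_pmf sketch_alg_def)
    (intro bind_pmf_cong refl, simp add: decode_encode_sk)

lemma space_bounded_sketch_alg:
  assumes "\<And>\<omega> s. \<omega> \<in> set_pmf \<Omega> \<Longrightarrow> length (sk \<omega> s) = R" "real (w * R) \<le> S"
  shows "space_bounded (alg out) n L S"
  unfolding space_bounded_def using assms by (auto simp: run_sketch_alg)

end

subsection \<open>The sampled-counts sketch\<close>

definition ins_count :: "update list \<Rightarrow> nat \<Rightarrow> nat" where
  "ins_count s a = length (filter (\<lambda>u. u = (a, True)) s)"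

definition del_count :: "update list \<Rightarrow> nat \<Rightarrow> nat" where
  "del_count s a = length (filter (\<lambda>u. u = (a, False)) s)"

lemma cnt_eq_ins_del: "cnt s a = int (ins_count s a) - int (del_count s a)"
  by (simp add: cnt_def ins_count_def del_count_def)

lemma sum_length_filter_pair:
  assumes "finite A" "\<forall>u\<in>set s. fst u \<in> A"
  shows "(\<Sum>a\<in>A. length (filter (\<lambda>u. u = (a, b)) s)) = length (filter (\<lambda>u. snd u = b) s)"
  using assms(2)
proof (induction s)
  case Nil
  then show ?case by simp
next
  case (Cons u s)
  obtain i c where u: "u = (i, c)" by fastforce
  with Cons.prems have "i \<in> A" by simp
  then have "(\<Sum>a\<in>A. of_bool (u = (a, b)) :: nat) = of_bool (snd u = b)"
    using assms(1) by (simp add: u)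
  moreover have "length (filter P (u # s)) = of_bool (P u) + length (filter P s)" for P
    by simp
  ultimately show ?case using Cons by (simp only: sum.distrib) simp
qed

lemma mtot_eq_ins_del:
  assumes "\<forall>u\<in>set s. fst u \<in> {1..n}"
  shows "mtot n s = int (length (filter snd s)) - int (length (filter (\<lambda>u. \<not> snd u) s))"
proof -
  have "(\<Sum>a=1..n. ins_count s a) = length (filter snd s)"
    using sum_length_filter_pair[OF _ assms, of True] by (simp add: ins_count_def)
  moreover have "(\<Sum>a=1..n. del_count s a) = length (filter (\<lambda>u. \<not> snd u) s)"
    using sum_length_filter_pair[OF _ assms, of False] by (simp add: del_count_def)
  ultimately show ?thesis
    unfolding mtot_def cnt_eq_ins_del sum_subtractf by (metis of_nat_sum)
qed

lemma pvec_nonneg: "valid_stream n s \<Longrightarrow> 0 < mtot n s \<Longrightarrow> 0 \<le> pvec n s i"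
  unfolding valid_stream_def pvec_def by (metis order_refl take_all of_int_nonneg divide_nonneg_pos of_int_pos)

lemma sum_pvec: "0 < mtot n s \<Longrightarrow> (\<Sum>i=1..n. pvec n s i) = 1"
  unfolding pvec_def by (simp add: mtot_def flip: sum_divide_distrib of_int_sum)

definition sample_sketch :: "nat list \<Rightarrow> update list \<Rightarrow> nat list" where
  "sample_sketch xs s = length (filter snd s) # length (filter (\<lambda>u. \<not> snd u) s)
     # concat (map (\<lambda>a. [a, ins_count s a, del_count s a]) xs)"

fun update_triples :: "update \<Rightarrow> nat list \<Rightarrow> nat list" where
  "update_triples u (a # x # y # r) =
     a # (if u = (a, True) then Suc x else x) # (if u = (a, False) then Suc y else y)
       # update_triples u r"
| "update_triples u r = r"

fun sketch_update :: "update \<Rightarrow> nat list \<Rightarrow> nat list" where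
  "sketch_update u (p # q # r) =
     (if snd u then Suc p else p) # (if snd u then q else Suc q) # update_triples u r"
| "sketch_update u r = r"

lemma sample_sketch_snoc: "sample_sketch xs (s @ [u]) = sketch_update u (sample_sketch xs s)"
proof -
  have "update_triples u (concat (map (\<lambda>a. [a, ins_count s a, del_count s a]) ys))
      = concat (map (\<lambda>a. [a, ins_count (s @ [u]) a, del_count (s @ [u]) a]) ys)" for ys
    by (induction ys) (auto simp: ins_count_def del_count_def)
  then show ?thesis by (simp add: sample_sketch_def)
qed

lemma length_sample_sketch: "length (sample_sketch xs s) = 2 + 3 * length xs"
  by (induction xs) (simp_all add: sample_sketch_def)

lemma sample_sketch_less:
  assumes "\<forall>a\<in>set xs. a < B" "length s < B"
  shows "\<forall>x\<in>set (sample_sketch xs s). x < B"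
proof -
  have "length (filter P s) < B" for P
    using assms(2) length_filter_le le_less_trans by blast
  then show ?thesis
    using assms(1) by (auto simp: sample_sketch_def ins_count_def del_count_def)
qed

fun triples :: "nat list \<Rightarrow> (nat \<times> nat \<times> nat) list" where
  "triples (a # x # y # r) = (a, x, y) # triples r"
| "triples _ = []"

definition sketch_items :: "nat list \<Rightarrow> nat list" where
  "sketch_items st = map fst (triples (drop 2 st))"

definition sketch_freq :: "nat list \<Rightarrow> nat \<Rightarrow> real" where
  "sketch_freq st a = (case map_of (triples (drop 2 st)) a of
      Some (x, y) \<Rightarrow> (real x - real y) / (real (st ! 0) - real (st ! 1))
    | None \<Rightarrow> 0)"

lemma triples_sample_sketch:
  "triples (drop 2 (sample_sketch xs s)) = map (\<lambda>a. (a, ins_count s a, del_count s a)) xs"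
proof -
  have "triples (concat (map (\<lambda>a. [a, f a, g a]) ys)) = map (\<lambda>a. (a, f a, g a)) ys" for f g ys
    by (induction ys) auto
  then show ?thesis by (simp add: sample_sketch_def)
qed

lemma sketch_items_sample_sketch: "sketch_items (sample_sketch xs s) = xs"
  by (simp add: sketch_items_def triples_sample_sketch comp_def)

lemma sketch_freq_sample_sketch:
  assumes "\<forall>u\<in>set s. fst u \<in> {1..n}" "a \<in> set xs"
  shows "sketch_freq (sample_sketch xs s) a = pvec n s a"
proof -
  have "map_of (triples (drop 2 (sample_sketch xs s))) a = Some (ins_count s a, del_count s a)"
    using assms(2) by (simp add: triples_sample_sketch map_of_map_restrict)
  then show ?thesis
    using assms(1) by (simp add: sketch_freq_def pvec_def cnt_eq_ins_del mtot_eq_ins_del)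
      (simp add: sample_sketch_def)
qed

subsection \<open>Sampling with replacement\<close>

definition samples :: "'a set \<Rightarrow> nat \<Rightarrow> 'a list set" where
  "samples U m = {xs. set xs \<subseteq> U \<and> length xs = m}"

lemma finite_samples: "finite U \<Longrightarrow> finite (samples U m)"
  by (simp add: samples_def finite_lists_length_eq)

lemma card_samples: "finite U \<Longrightarrow> card (samples U m) = card U ^ m"
  by (simp add: samples_def card_lists_length_eq)

lemma sum_samples_Suc:
  fixes h :: "'a list \<Rightarrow> real"
  assumes "finite U"
  shows "(\<Sum>xs\<in>samples U (Suc m). h xs) = (\<Sum>x\<in>U. \<Sum>xs\<in>samples U m. h (x#xs))"
proof -
  have "(\<Sum>xs\<in>samples U (Suc m). h xs) = (\<Sum>p\<in>samples U m \<times> U. h (snd p # fst p))"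
    unfolding samples_def lists_length_Suc_eq
    by (subst sum.reindex) (auto simp: inj_on_def case_prod_unfold)
  also have "\<dots> = (\<Sum>xs\<in>samples U m. \<Sum>x\<in>U. h (x#xs))"
    by (simp add: sum.cartesian_product case_prod_unfold)
  also have "\<dots> = (\<Sum>x\<in>U. \<Sum>xs\<in>samples U m. h (x#xs))"
    by (rule sum.swap)
  finally show ?thesis .
qed

lemma sum_samples_sum_list:
  fixes Y :: "'a \<Rightarrow> real"
  assumes "finite U" "sum Y U = 0"
  shows "(\<Sum>xs\<in>samples U m. sum_list (map Y xs)) = 0"
proof (induction m)
  case 0 then show ?case by (simp add: samples_def)
next
  case (Suc m)
  have "(\<Sum>xs\<in>samples U (Suc m). sum_list (map Y xs)) = (\<Sum>x\<in>U. \<Sum>xs\<in>samples U m. Y x + sum_list (map Y xs))"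
    by (simp add: sum_samples_Suc assms)
  also have "\<dots> = (\<Sum>x\<in>U. real (card (samples U m)) * Y x)"
    by (simp add: sum.distrib Suc)
  also have "\<dots> = 0" by (simp add: sum_distrib_left[symmetric] assms)
  finally show ?case .
qed

lemma sum_samples_sum_list_squared:
  fixes Y :: "'a \<Rightarrow> real"
  assumes "finite U" "sum Y U = 0"
  shows "(\<Sum>xs\<in>samples U m. (sum_list (map Y xs))^2) = real m * real (card U) ^ (m - 1) * (\<Sum>u\<in>U. (Y u)^2)"
proof (induction m)
  case 0 then show ?case by (simp add: samples_def)
next
  case (Suc m)
  let ?V = "\<Sum>u\<in>U. (Y u)^2"
  have "(\<Sum>xs\<in>samples U (Suc m). (sum_list (map Y xs))^2)
      = (\<Sum>x\<in>U. \<Sum>xs\<in>samples U m. (Y x)^2 + 2 * Y x * sum_list (map Y xs) + (sum_list (map Y xs))^2)"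
    by (simp add: sum_samples_Suc assms power2_sum add_ac)
  also have "\<dots> = (\<Sum>x\<in>U. real (card (samples U m)) * (Y x)^2 + 2 * Y x * (\<Sum>xs\<in>samples U m. sum_list (map Y xs))
        + real m * real (card U) ^ (m - 1) * ?V)"
    by (simp add: sum.distrib Suc sum_distrib_left[symmetric])
  also have "\<dots> = real (card U) ^ m * ?V + real (card U) * (real m * real (card U) ^ (m - 1) * ?V)"
    using sum_samples_sum_list[OF assms, of m] by (simp add: sum.distrib sum_distrib_left[symmetric] card_samples assms)
  also have "\<dots> = real (Suc m) * real (card U) ^ (Suc m - 1) * ?V"
    by (cases m) (simp_all add: algebra_simps)
  finally show ?case .
qed

lemma card_abs_ge_le:
  fixes g :: "'a \<Rightarrow> real"
  assumes "finite A" "0 < \<tau>"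
  shows "real (card {x\<in>A. \<tau> \<le> \<bar>g x\<bar>}) * \<tau>^2 \<le> (\<Sum>x\<in>A. (g x)^2)"
proof -
  have "real (card {x\<in>A. \<tau> \<le> \<bar>g x\<bar>}) * \<tau>^2 = (\<Sum>x\<in>{x\<in>A. \<tau> \<le> \<bar>g x\<bar>}. \<tau>^2)" by simp
  also have "\<dots> \<le> (\<Sum>x\<in>{x\<in>A. \<tau> \<le> \<bar>g x\<bar>}. (g x)^2)"
  proof (intro sum_mono)
    fix x assume "x \<in> {x\<in>A. \<tau> \<le> \<bar>g x\<bar>}"
    then have "\<tau>^2 \<le> \<bar>g x\<bar>^2" using assms by (intro power_mono) auto
    then show "\<tau>^2 \<le> (g x)^2" by simp
  qed
  also have "\<dots> \<le> (\<Sum>x\<in>A. (g x)^2)" by (intro sum_mono2 assms) auto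
  finally show ?thesis .
qed

lemma sum_sq_deviation_le:
  fixes a :: "'a \<Rightarrow> real"
  assumes "finite A" "A \<noteq> {}" "\<And>u. u \<in> A \<Longrightarrow> 0 \<le> a u \<and> a u \<le> \<delta>"
  shows "(\<Sum>u\<in>A. (a u - sum a A / real (card A))\<^sup>2) \<le> \<delta> * sum a A"
proof -
  define c where "c = sum a A / real (card A)"
  have N: "0 < real (card A)" using assms(1,2) by (simp add: card_gt_0_iff)
  have "(\<Sum>u\<in>A. 2 * a u * c) = 2 * c * sum a A"
    by (simp add: sum_distrib_left sum_distrib_right mult_ac)
  then have "(\<Sum>u\<in>A. (a u - c)\<^sup>2) = (\<Sum>u\<in>A. (a u)\<^sup>2) - 2 * c * sum a A + real (card A) * c\<^sup>2"
    by (simp add: power2_diff sum.distrib sum_subtractf)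
  also have "\<dots> = (\<Sum>u\<in>A. (a u)\<^sup>2) - (sum a A)\<^sup>2 / real (card A)"
    using N by (simp add: c_def field_simps power2_eq_square)
  also have "\<dots> \<le> (\<Sum>u\<in>A. (a u)\<^sup>2)" by simp
  also have "\<dots> \<le> (\<Sum>u\<in>A. \<delta> * a u)"
    using assms(3) by (intro sum_mono) (simp add: power2_eq_square mult_right_mono)
  finally show ?thesis by (simp add: c_def sum_distrib_left)
qed

text \<open>Chebyshev's inequality for the estimate \<open>n/m \<cdot> \<Sum>\<^sub>i a x\<^sub>i\<close> of \<open>\<Sum>\<^sub>u a u\<close> from a
  uniform sample \<open>x\<^sub>1, \<dots>, x\<^sub>m\<close> with replacement, in counting form.\<close>

lemma card_deviating_samples:
  fixes a :: "nat \<Rightarrow> real"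
  assumes "1 \<le> n" "1 \<le> m" "0 < \<tau>" "\<And>u. u \<in> {1..n} \<Longrightarrow> 0 \<le> a u \<and> a u \<le> \<delta>"
  defines "E \<equiv> (\<Sum>u\<in>{1..n}. a u)"
  shows "real (card {xs\<in>samples {1..n} m. \<tau> \<le> \<bar>real n / real m * sum_list (map a xs) - E\<bar>}) * \<tau>^2
     \<le> real n ^ m * (real n * \<delta> * E / real m)"
proof -
  define Y where "Y u = a u - E / real n" for u
  have sY: "sum Y {1..n} = 0" using assms(1) by (simp add: Y_def sum_subtractf E_def)
  have eq: "real n / real m * sum_list (map a xs) - E = real n / real m * sum_list (map Y xs)"
    if "xs \<in> samples {1..n} m" for xs
  proof -
    have "sum_list (map Y xs) = sum_list (map a xs) - real (length xs) * (E / real n)"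
      unfolding Y_def by (induction xs) (auto simp: algebra_simps)
    then show ?thesis using that assms(1,2) by (simp add: samples_def field_simps)
  qed
  have V: "(\<Sum>u\<in>{1..n}. (Y u)^2) \<le> \<delta> * E"
    unfolding Y_def E_def using sum_sq_deviation_le[of "{1..n}" a \<delta>] assms(1,4) by simp
  have "real (card {xs\<in>samples {1..n} m. \<tau> \<le> \<bar>real n / real m * sum_list (map a xs) - E\<bar>}) * \<tau>^2
      \<le> (\<Sum>xs\<in>samples {1..n} m. (real n / real m * sum_list (map a xs) - E)^2)"
    by (rule card_abs_ge_le[OF finite_samples assms(3)]) simp
  also have "\<dots> = (\<Sum>xs\<in>samples {1..n} m. (real n / real m)^2 * (sum_list (map Y xs))^2)"
    by (intro sum.cong refl) (simp only: eq power_mult_distrib)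
  also have "\<dots> = (real n / real m)^2 * (real m * real n ^ (m - 1) * (\<Sum>u\<in>{1..n}. (Y u)^2))"
    using sum_samples_sum_list_squared[OF _ sY, of m] by (simp add: sum_distrib_left[symmetric])
  also have "\<dots> \<le> (real n / real m)^2 * (real m * real n ^ (m - 1) * (\<delta> * E))"
    by (intro mult_left_mono V) auto
  also have "\<dots> = real n ^ m * (real n * \<delta> * E / real m)"
  proof -
    have "real n ^ m = real n * real n ^ (m - 1)" using assms(2)
      by (metis Suc_diff_le diff_Suc_1 power_Suc)
    then show ?thesis using assms(2) by (simp add: power2_eq_square field_simps)
  qed
  finally show ?thesis .
qed

subsection \<open>The median trick\<close>

lemma prod_if_mem:
  fixes x y :: "'a :: comm_monoid_mult"
  assumes "B \<subseteq> {..<t}"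
  shows "(\<Prod>c\<in>{..<t}. if c \<in> B then x else y) = x ^ card B * y ^ (t - card B)"
proof -
  have fB: "finite B" using assms finite_subset by blast
  have "(\<Prod>c\<in>{..<t}. if c \<in> B then x else y) = (\<Prod>c\<in>{..<t} \<inter> {c. c \<in> B}. x) * (\<Prod>c\<in>{..<t} \<inter> - {c. c \<in> B}. y)"
    by (rule prod.If_cases) simp
  also have "{..<t} \<inter> - {c. c \<in> B} = {..<t} - B" by auto
  also have "{..<t} \<inter> {c. c \<in> B} = {..<t} \<inter> B" by auto
  also have "{..<t} \<inter> B = B" using assms by auto
  also have "card ({..<t} - B) = t - card B" using assms fB by (simp add: card_Diff_subset)
  then have "(\<Prod>c\<in>{..<t} - B. y) = y ^ (t - card B)" by simp
  finally show ?thesis by simp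
qed

lemma card_PiE_mostly_bad_le:
  fixes Oc :: "'a set"
  assumes "finite Oc" "Bad \<subseteq> Oc" "real (card Bad) \<le> real (card Oc) / 16"
    and B: "B \<subseteq> {..<t}" "real t \<le> 2 * real (card B)"
  shows "real (card (PiE {..<t} (\<lambda>c. if c \<in> B then Bad else Oc))) \<le> real (card Oc) ^ t / 4 ^ t"
proof -
  have "real (card (PiE {..<t} (\<lambda>c. if c \<in> B then Bad else Oc)))
      = (\<Prod>c\<in>{..<t}. if c \<in> B then real (card Bad) else real (card Oc))"
    by (simp add: card_PiE if_distrib)
  also have "\<dots> = real (card Bad) ^ card B * real (card Oc) ^ (t - card B)"
    by (rule prod_if_mem[OF B(1)])
  also have "\<dots> \<le> (real (card Oc) / 16) ^ card B * real (card Oc) ^ (t - card B)"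
    by (intro mult_right_mono power_mono assms(3)) simp_all
  also have "\<dots> = real (card Oc) ^ (card B + (t - card B)) / 16 ^ card B"
    by (simp add: power_add field_simps)
  also have "card B + (t - card B) = t"
    using card_mono[OF _ B(1)] by simp
  also have "real (card Oc) ^ t / 16 ^ card B \<le> real (card Oc) ^ t / 4 ^ t"
  proof (rule divide_left_mono)
    have "(4::real) ^ t \<le> 4 ^ (2 * card B)" using B(2) by (intro power_increasing) auto
    also have "\<dots> = 16 ^ card B" by (simp add: power_mult)
    finally show "(4::real) ^ t \<le> 16 ^ card B" .
  qed simp_all
  finally show ?thesis .
qed

lemma card_majority_bad_le:
  fixes Oc :: "'a set"
  assumes "finite Oc" "Bad \<subseteq> Oc" "real (card Bad) \<le> real (card Oc) / 16"
  shows "real (card {\<omega>\<in>PiE {..<t} (\<lambda>_. Oc). real t \<le> 2 * real (card {c\<in>{..<t}. \<omega> c \<in> Bad})})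
      \<le> real (card Oc) ^ t / 2 ^ t"
proof -
  define \<B> where "\<B> = {B. B \<subseteq> {..<t} \<and> real t \<le> 2 * real (card B)}"
  define F where "F B = PiE {..<t} (\<lambda>c. if c \<in> B then Bad else Oc)" for B
  have "\<B> \<subseteq> Pow {..<t}" by (auto simp: \<B>_def)
  then have fin\<B>: "finite \<B>" by (rule finite_subset) simp
  have card\<B>: "card \<B> \<le> 2 ^ t"
  proof -
    have "card \<B> \<le> card (Pow {..<t::nat})" by (rule card_mono) (auto simp: \<B>_def)
    then show ?thesis by (simp add: card_Pow)
  qed
  have sub: "{\<omega>\<in>PiE {..<t} (\<lambda>_. Oc). real t \<le> 2 * real (card {c\<in>{..<t}. \<omega> c \<in> Bad})} \<subseteq> (\<Union>B\<in>\<B>. F B)"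
  proof
    fix \<omega> assume \<omega>: "\<omega> \<in> {\<omega>\<in>PiE {..<t} (\<lambda>_. Oc). real t \<le> 2 * real (card {c\<in>{..<t}. \<omega> c \<in> Bad})}"
    define B where "B = {c\<in>{..<t}. \<omega> c \<in> Bad}"
    have "B \<in> \<B>" using \<omega> by (auto simp: B_def \<B>_def)
    moreover have "\<omega> \<in> F B" using \<omega> by (auto simp: F_def B_def PiE_def Pi_def)
    ultimately show "\<omega> \<in> (\<Union>B\<in>\<B>. F B)" by blast
  qed
  have fBad: "finite Bad" using finite_subset[OF assms(2) assms(1)] .
  have finF: "finite (F B)" for B unfolding F_def by (rule finite_PiE) (simp_all add: fBad assms(1))
  have cardF: "real (card (F B)) \<le> real (card Oc) ^ t / 4 ^ t" if "B \<in> \<B>" for B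
    using card_PiE_mostly_bad_le[OF assms] that by (simp add: F_def \<B>_def)
  have "real (card {\<omega>\<in>PiE {..<t} (\<lambda>_. Oc). real t \<le> 2 * real (card {c\<in>{..<t}. \<omega> c \<in> Bad})})
      \<le> real (card (\<Union>B\<in>\<B>. F B))"
    using sub fin\<B> finF by (intro of_nat_mono card_mono) auto
  also have "\<dots> \<le> real (\<Sum>B\<in>\<B>. card (F B))"
    by (intro of_nat_mono card_UN_le fin\<B>)
  also have "\<dots> = (\<Sum>B\<in>\<B>. real (card (F B)))" by simp
  also have "\<dots> \<le> (\<Sum>B\<in>\<B>. real (card Oc) ^ t / 4 ^ t)"
    by (intro sum_mono cardF)
  also have "\<dots> = real (card \<B>) * (real (card Oc) ^ t / 4 ^ t)" by simp
  also have "\<dots> \<le> 2 ^ t * (real (card Oc) ^ t / 4 ^ t)"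
  proof (rule mult_right_mono)
    have "real (card \<B>) \<le> real (2 ^ t)" using card\<B> by (rule of_nat_mono)
    then show "real (card \<B>) \<le> 2 ^ t" by simp
  qed simp
  also have "\<dots> = real (card Oc) ^ t / 2 ^ t"
  proof -
    have "(4::real) ^ t = 2 ^ t * 2 ^ t" by (induction t) simp_all
    then show ?thesis by simp
  qed
  finally show ?thesis .
qed

definition median :: "nat \<Rightarrow> (nat \<Rightarrow> real) \<Rightarrow> real" where
  "median t v = Inf {y. real t < 2 * real (card {c\<in>{..<t}. v c \<le> y})}"

lemma median_close:
  assumes "real t < 2 * real (card {c\<in>{..<t}. \<bar>v c - e\<bar> < \<tau>})"
  shows "\<bar>median t v - e\<bar> \<le> \<tau>"
proof -
  let ?G = "{c\<in>{..<t}. \<bar>v c - e\<bar> < \<tau>}"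
  let ?S = "{y. real t < 2 * real (card {c\<in>{..<t}. v c \<le> y})}"
  have upper: "e + \<tau> \<in> ?S"
  proof -
    have "card ?G \<le> card {c\<in>{..<t}. v c \<le> e + \<tau>}" by (intro card_mono) auto
    then show ?thesis using assms by simp
  qed
  have lower: "e - \<tau> \<le> y" if "y \<in> ?S" for y
  proof (rule ccontr)
    assume "\<not> e - \<tau> \<le> y"
    then have "{c\<in>{..<t}. v c \<le> y} \<subseteq> {..<t} - ?G" by auto
    then have "card {c\<in>{..<t}. v c \<le> y} \<le> card ({..<t} - ?G)"
      by (intro card_mono) auto
    also have "\<dots> = t - card ?G" by (subst card_Diff_subset) auto
    finally have "card {c\<in>{..<t}. v c \<le> y} \<le> t - card ?G" .
    moreover have "card ?G \<le> t" using card_mono[OF finite_lessThan, of ?G t] by auto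
    ultimately have "real (card {c\<in>{..<t}. v c \<le> y}) \<le> real t - real (card ?G)"
      by (simp flip: of_nat_le_iff)
    then show False using that assms by simp
  qed
  have "e - \<tau> \<le> median t v" unfolding median_def using upper lower by (intro cInf_greatest) auto
  moreover have "median t v \<le> e + \<tau>"
    unfolding median_def using upper lower by (intro cInf_lower) (auto simp: bdd_below_def)
  ultimately show ?thesis by linarith
qed

subsection \<open>Histograms with values on a grid\<close>

lemma hist_piece:
  fixes d :: "nat \<Rightarrow> nat"
  assumes "d 0 = 0" "d k = n" "x \<in> {1..n}"
  defines "j0 \<equiv> LEAST j. x \<le> d j"
  shows "j0 \<in> {1..k}" "x \<in> {d (j0 - 1) + 1 .. d j0}"
proof -
  have ex: "x \<le> d k" using assms by simp
  have j0: "x \<le> d j0" unfolding j0_def by (rule LeastI[of "\<lambda>j. x \<le> d j" k, OF ex])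
  have j0k: "j0 \<le> k" unfolding j0_def by (rule Least_le[of "\<lambda>j. x \<le> d j" k, OF ex])
  have j00: "j0 \<noteq> 0"
  proof
    assume "j0 = 0" with j0 assms(1,3) show False by simp
  qed
  show "j0 \<in> {1..k}" using j0k j00 by auto
  have "\<not> x \<le> d (j0 - 1)" unfolding j0_def
    by (rule not_less_Least) (use j00 in \<open>simp add: j0_def\<close>)
  then show "x \<in> {d (j0 - 1) + 1 .. d j0}" using j0 by auto
qed

lemma hist_setE:
  assumes "f \<in> hist_set n k"
  obtains d g where "d 0 = 0" "d k = n" "\<forall>j<k. d j \<le> d (Suc j)" "\<forall>j\<le>k. d j \<le> n"
    "\<forall>j\<in>{1..k}. 0 \<le> g j \<and> g j \<le> 1" "\<forall>j\<in>{1..k}. \<forall>x\<in>{d (j - 1) + 1 .. d j}. f x = g j"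
    "\<forall>x. x \<notin> {1..n} \<longrightarrow> f x = 0"
proof -
  obtain d g where dg: "d 0 = 0" "d k = n" "\<forall>j<k. d j \<le> d (Suc j)"
    "\<forall>j\<in>{1..k}. 0 \<le> g j \<and> g j \<le> 1" "\<forall>j\<in>{1..k}. \<forall>x\<in>{d (j - 1) + 1 .. d j}. f x = g j"
    "\<forall>x. x \<notin> {1..n} \<longrightarrow> f x = 0"
    using assms unfolding hist_set_def by blast
  have dn: "\<forall>j\<le>k. d j \<le> n"
  proof (intro allI impI)
    fix j assume "j \<le> k"
    have "d j \<le> d k"
      by (rule lift_Suc_mono_le_ivl[of "{..<k}"]) (use dg(3) \<open>j \<le> k\<close> in auto)
    then show "d j \<le> n" using dg(2) by simp
  qed
  show thesis by (rule that[OF dg(1-3) dn dg(4-6)])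
qed

lemma hist_set_range:
  assumes "f \<in> hist_set n k" "x \<in> {1..n}"
  shows "0 \<le> f x \<and> f x \<le> 1"
proof -
  obtain d g where dg: "d 0 = 0" "d k = n" "\<forall>j<k. d j \<le> d (Suc j)" "\<forall>j\<le>k. d j \<le> n"
    "\<forall>j\<in>{1..k}. 0 \<le> g j \<and> g j \<le> 1" "\<forall>j\<in>{1..k}. \<forall>x\<in>{d (j - 1) + 1 .. d j}. f x = g j"
    "\<forall>x. x \<notin> {1..n} \<longrightarrow> f x = 0"
    by (rule hist_setE[OF assms(1)])
  show ?thesis using hist_piece[OF dg(1,2) assms(2)] dg(5,6) by metis
qed

definition grid :: "real \<Rightarrow> nat \<Rightarrow> real set" where
  "grid h J = (\<lambda>j. h * real j) ` {..J}"

definition grid_hists :: "nat \<Rightarrow> nat \<Rightarrow> real \<Rightarrow> nat \<Rightarrow> (nat \<Rightarrow> real) set" where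
  "grid_hists n k h J = {f \<in> hist_set n k. \<forall>x\<in>{1..n}. f x \<in> grid h J}"

definition hist_of_pieces :: "nat \<Rightarrow> (nat \<Rightarrow> nat) \<times> (nat \<Rightarrow> real) \<Rightarrow> nat \<Rightarrow> real" where
  "hist_of_pieces n dg x = (if x \<in> {1..n} then snd dg (LEAST j. x \<le> fst dg j) else 0)"

lemma Least_le_restrict:
  fixes d :: "nat \<Rightarrow> nat"
  assumes "x \<le> d k"
  shows "(LEAST j. x \<le> restrict d {..k} j) = (LEAST j. x \<le> d j)"
proof (rule Least_equality)
  have "(LEAST j. x \<le> d j) \<le> k" using assms by (rule Least_le)
  then show "x \<le> restrict d {..k} (LEAST j. x \<le> d j)" using LeastI[of _ k] assms by simp
next
  fix j assume "x \<le> restrict d {..k} j"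
  then show "(LEAST j. x \<le> d j) \<le> j"
    using assms by (cases "j \<le> k") (auto intro: Least_le le_trans[OF Least_le[of _ k]])
qed

lemma grid_hists_subset:
  "grid_hists n k h J \<subseteq> hist_of_pieces n ` (PiE {..k} (\<lambda>_. {0..n}) \<times> PiE {..k} (\<lambda>_. grid h J))"
proof
  fix f assume fC: "f \<in> grid_hists n k h J"
  then have fg: "\<forall>x\<in>{1..n}. f x \<in> grid h J" by (simp add: grid_hists_def)
  obtain d g where dg: "d 0 = 0" "d k = n" "\<forall>j<k. d j \<le> d (Suc j)" "\<forall>j\<le>k. d j \<le> n"
    "\<forall>j\<in>{1..k}. 0 \<le> g j \<and> g j \<le> 1" "\<forall>j\<in>{1..k}. \<forall>x\<in>{d (j - 1) + 1 .. d j}. f x = g j"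
    "\<forall>x. x \<notin> {1..n} \<longrightarrow> f x = 0"
    by (rule hist_setE[OF fC[unfolded grid_hists_def, THEN CollectD, THEN conjunct1]])
  \<comment> \<open>values on empty pieces are irrelevant and are replaced by a grid point\<close>
  define g' where "g' = restrict (\<lambda>j. if j \<in> {1..k} \<and> d (j - 1) < d j then g j else 0) {..k}"
  have "restrict d {..k} \<in> PiE {..k} (\<lambda>_. {0..n})" using dg(4) by auto
  moreover have "g' \<in> PiE {..k} (\<lambda>_. grid h J)"
  proof -
    have "g j \<in> grid h J" if "j \<in> {1..k}" "d (j - 1) < d j" for j
    proof -
      have "f (d j) = g j" using dg(6) that by auto
      moreover have "d j \<in> {1..n}" using that dg(4) by auto
      ultimately show ?thesis using fg by metis
    qed
    moreover have "0 \<in> grid h J" unfolding grid_def by (rule image_eqI[of _ _ 0]) auto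
    ultimately show ?thesis by (auto simp: g'_def)
  qed
  moreover have "f x = hist_of_pieces n (restrict d {..k}, g') x" for x
  proof (cases "x \<in> {1..n}")
    case True
    define j0 where "j0 = (LEAST j. x \<le> d j)"
    have j0: "j0 \<in> {1..k}" "x \<in> {d (j0 - 1) + 1 .. d j0}"
      using hist_piece[OF dg(1,2) True] unfolding j0_def by auto
    then have "g' j0 = g j0" "f x = g j0" using dg(6) by (auto simp: g'_def)
    moreover have "(LEAST j. x \<le> restrict d {..k} j) = j0"
      unfolding j0_def using True dg(2) by (intro Least_le_restrict) simp
    ultimately show ?thesis using True by (simp add: hist_of_pieces_def)
  qed (use dg(7) in \<open>auto simp: hist_of_pieces_def\<close>)
  ultimately show "f \<in> hist_of_pieces n ` (PiE {..k} (\<lambda>_. {0..n}) \<times> PiE {..k} (\<lambda>_. grid h J))"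
    by blast
qed

lemma card_grid_le: "card (grid h J) \<le> J + 1"
  unfolding grid_def using card_image_le[of "{..J}" "\<lambda>j. h * real j"] by simp

lemma finite_grid: "finite (grid h J)"
  unfolding grid_def by simp

lemma finite_grid_hists: "finite (grid_hists n k h J)"
proof (rule finite_subset[OF grid_hists_subset])
  show "finite (hist_of_pieces n ` (PiE {..k} (\<lambda>_. {0..n}) \<times> PiE {..k} (\<lambda>_. grid h J)))"
    by (intro finite_imageI finite_cartesian_product finite_PiE) (simp_all add: finite_grid)
qed

lemma card_grid_hists_le: "card (grid_hists n k h J) \<le> ((n + 1) * (J + 1)) ^ (k + 1)"
proof -
  let ?D = "PiE {..k} (\<lambda>_. {0..n}) \<times> PiE {..k} (\<lambda>_. grid h J)"
  have fD: "finite ?D" by (intro finite_cartesian_product finite_PiE) (simp_all add: finite_grid)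
  have "card (grid_hists n k h J) \<le> card (hist_of_pieces n ` ?D)"
    using grid_hists_subset fD by (intro card_mono finite_imageI)
  also have "\<dots> \<le> card ?D" by (rule card_image_le[OF fD])
  also have "\<dots> = (n + 1) ^ (k + 1) * card (grid h J) ^ (k + 1)"
    by (simp add: card_cartesian_product card_PiE)
  also have "\<dots> \<le> (n + 1) ^ (k + 1) * (J + 1) ^ (k + 1)"
    by (intro mult_le_mono2 power_mono card_grid_le) simp
  also have "\<dots> = ((n + 1) * (J + 1)) ^ (k + 1)" by (rule power_mult_distrib[symmetric])
  finally show ?thesis .
qed

lemma grid_hists_bounded:
  assumes "0 < h" "0 \<le> \<delta>" "f \<in> grid_hists n k h (nat \<lfloor>\<delta> / h\<rfloor>)" "x \<in> {1..n}"
  shows "0 \<le> f x \<and> f x \<le> \<delta>"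
proof -
  have "f x \<in> grid h (nat \<lfloor>\<delta> / h\<rfloor>)" using assms(3,4) by (simp add: grid_hists_def)
  then obtain j where j: "j \<le> nat \<lfloor>\<delta> / h\<rfloor>" "f x = h * real j" by (auto simp: grid_def)
  have "real j \<le> real (nat \<lfloor>\<delta> / h\<rfloor>)" using j(1) by simp
  also have "\<dots> \<le> \<delta> / h" using assms(1,2) by simp
  finally have "real j \<le> \<delta> / h" .
  then show ?thesis using j(2) assms(1,2) by (simp add: field_simps)
qed

definition err_term :: "(nat \<Rightarrow> real) \<Rightarrow> (nat \<Rightarrow> real) \<Rightarrow> nat \<Rightarrow> real" where
  "err_term P f a = (if 0 < P a then \<bar>P a - f a\<bar> else 0)"

lemma err_eq_sum_err_term: "err n P f = (\<Sum>a\<in>{1..n}. err_term P f a)"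
  unfolding err_def err_term_def by (rule sum.inter_filter) simp

text \<open>Capping at \<open>\<delta>\<close> first cannot increase \<open>|p\<^sub>i - f x|\<close> when all \<open>p\<^sub>i \<le> \<delta>\<close>, and
  keeps the grid, hence the candidate set, small.\<close>

definition round_down :: "real \<Rightarrow> real \<Rightarrow> real \<Rightarrow> real" where
  "round_down h \<delta> y = h * real (nat \<lfloor>min y \<delta> / h\<rfloor>)"

lemma round_down_props:
  assumes "0 < h" "0 \<le> \<delta>" "0 \<le> y"
  shows "round_down h \<delta> y \<in> grid h (nat \<lfloor>\<delta> / h\<rfloor>)" "0 \<le> round_down h \<delta> y" "round_down h \<delta> y \<le> min y \<delta>"
    "min y \<delta> - h < round_down h \<delta> y"
proof -
  define z where "z = min y \<delta> / h"
  have z0: "0 \<le> z" using assms by (simp add: z_def)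
  have fl: "real (nat \<lfloor>z\<rfloor>) = of_int \<lfloor>z\<rfloor>" using z0 by simp
  have "\<lfloor>z\<rfloor> \<le> \<lfloor>\<delta> / h\<rfloor>" unfolding z_def using assms
    by (intro floor_mono divide_right_mono) auto
  then have "nat \<lfloor>z\<rfloor> \<le> nat \<lfloor>\<delta> / h\<rfloor>" by simp
  then show "round_down h \<delta> y \<in> grid h (nat \<lfloor>\<delta> / h\<rfloor>)" unfolding round_down_def grid_def z_def by auto
  show "0 \<le> round_down h \<delta> y" unfolding round_down_def using assms by simp
  have "h * of_int \<lfloor>z\<rfloor> \<le> h * z" using assms by (intro mult_left_mono) auto
  then show "round_down h \<delta> y \<le> min y \<delta>" unfolding round_down_def using fl assms by (simp add: z_def)
  have "h * (z - 1) < h * of_int \<lfloor>z\<rfloor>" using assms by (intro mult_strict_left_mono) linarith+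
  then show "min y \<delta> - h < round_down h \<delta> y" unfolding round_down_def using fl assms
    by (simp add: z_def right_diff_distrib)
qed

lemma round_down_err:
  assumes "0 < h" "0 \<le> \<delta>" "0 \<le> y" "0 \<le> p" "p \<le> \<delta>"
  shows "\<bar>p - round_down h \<delta> y\<bar> \<le> \<bar>p - y\<bar> + h"
proof -
  note r = round_down_props[OF assms(1-3)]
  have "\<bar>p - min y \<delta>\<bar> \<le> \<bar>p - y\<bar>" using assms by (auto simp: min_def)
  moreover have "\<bar>p - round_down h \<delta> y\<bar> \<le> \<bar>p - min y \<delta>\<bar> + h" using r(3,4) by linarith
  ultimately show ?thesis by linarith
qed

lemma round_down_hist_in_grid_hists:
  assumes "0 < h" "0 \<le> \<delta>" "f \<in> hist_set n k"
  shows "(\<lambda>x. if x \<in> {1..n} then round_down h \<delta> (f x) else 0) \<in> grid_hists n k h (nat \<lfloor>\<delta> / h\<rfloor>)"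
    (is "?f \<in> _")
proof -
  obtain d g where dg: "d 0 = 0" "d k = n" "\<forall>j<k. d j \<le> d (Suc j)" "\<forall>j\<le>k. d j \<le> n"
    "\<forall>j\<in>{1..k}. 0 \<le> g j \<and> g j \<le> 1" "\<forall>j\<in>{1..k}. \<forall>x\<in>{d (j - 1) + 1 .. d j}. f x = g j"
    "\<forall>x. x \<notin> {1..n} \<longrightarrow> f x = 0"
    by (rule hist_setE[OF assms(3)])
  have "?f \<in> hist_set n k"
    unfolding hist_set_def
  proof (intro CollectI conjI exI[of _ d] exI[of _ "\<lambda>j. round_down h \<delta> (g j)"] allI impI ballI)
    show "d 0 = 0" "d k = n" by (fact dg(1), fact dg(2))
    show "\<And>j. j < k \<Longrightarrow> d j \<le> d (Suc j)" using dg(3) by blast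
    fix j assume j: "j \<in> {1..k}"
    note r = round_down_props[OF assms(1,2), of "g j"]
    show "0 \<le> round_down h \<delta> (g j)" using r dg(5) j by blast
    show "round_down h \<delta> (g j) \<le> 1" using r dg(5) j by (meson min.boundedE order.trans)
    fix x assume x: "x \<in> {d (j - 1) + 1 .. d j}"
    then have "x \<in> {1..n}" using dg(4) j by auto
    then show "?f x = round_down h \<delta> (g j)" using dg(6) j x by simp
  qed auto
  moreover have "\<forall>x\<in>{1..n}. ?f x \<in> grid h (nat \<lfloor>\<delta> / h\<rfloor>)"
    using round_down_props(1)[OF assms(1,2)] hist_set_range[OF assms(3)] by simp
  ultimately show ?thesis by (simp add: grid_hists_def)
qed

lemma grid_hist_near:
  assumes "0 < h" "0 \<le> \<delta>" "\<forall>x\<in>{1..n}. 0 \<le> P x \<and> P x \<le> \<delta>" "f \<in> hist_set n k"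
  shows "\<exists>f'\<in>grid_hists n k h (nat \<lfloor>\<delta> / h\<rfloor>). err n P f' \<le> err n P f + real n * h"
proof
  let ?f = "\<lambda>x. if x \<in> {1..n} then round_down h \<delta> (f x) else 0"
  let ?S = "{i\<in>{1..n}. 0 < P i}"
  show "?f \<in> grid_hists n k h (nat \<lfloor>\<delta> / h\<rfloor>)" by (rule round_down_hist_in_grid_hists[OF assms(1,2,4)])
  have "err n P ?f \<le> (\<Sum>i\<in>?S. \<bar>P i - f i\<bar> + h)"
    unfolding err_def
    using round_down_err[OF assms(1,2)] hist_set_range[OF assms(4)] assms(3) by (intro sum_mono) simp
  also have "\<dots> = err n P f + real (card ?S) * h" by (simp add: err_def sum.distrib)
  also have "\<dots> \<le> err n P f + real n * h"
  proof -
    have "card ?S \<le> card {1..n}" by (intro card_mono) auto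
    then show ?thesis using assms(1) by (simp add: mult_right_mono)
  qed
  finally show "err n P ?f \<le> err n P f + real n * h" .
qed

lemma zero_in_hist_set: "1 \<le> k \<Longrightarrow> (\<lambda>_. 0) \<in> hist_set n k"
  unfolding hist_set_def
  by (intro CollectI conjI exI[of _ "\<lambda>j. if j = 0 then 0 else n"] exI[of _ "\<lambda>_. 0"]) auto

lemma err_nonneg: "0 \<le> err n P f"
  unfolding err_def by (intro sum_nonneg) auto

lemma opt_err_le_1:
  assumes "1 \<le> k" "\<And>i. 0 \<le> P i" "(\<Sum>i=1..n. P i) = 1"
  shows "opt_err n k P \<le> 1"
proof -
  have "opt_err n k P \<le> err n P (\<lambda>_. 0)" unfolding opt_err_def
    by (intro cInf_lower imageI zero_in_hist_set assms(1)) (auto simp: bdd_below_def intro!: exI[of _ 0] err_nonneg)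
  also have "err n P (\<lambda>_. 0) = (\<Sum>i\<in>{i\<in>{1..n}. 0 < P i}. P i)" by (simp add: err_def)
  also have "\<dots> = (\<Sum>i=1..n. P i)"
  proof (rule sum.mono_neutral_left)
    show "\<forall>i\<in>{1..n} - {i\<in>{1..n}. 0 < P i}. P i = 0" using assms(2) by (auto simp: less_le)
  qed auto
  finally show ?thesis using assms(3) by simp
qed

lemma near_optimal_hist:
  assumes "1 \<le> k" "0 < \<eta>"
  shows "\<exists>f\<in>hist_set n k. err n P f < opt_err n k P + \<eta>"
proof -
  have "Inf (err n P ` hist_set n k) < opt_err n k P + \<eta>" using assms by (simp add: opt_err_def)
  then obtain y where "y \<in> err n P ` hist_set n k" "y < opt_err n k P + \<eta>"
    using cInf_lessD[of "err n P ` hist_set n k"] zero_in_hist_set[OF assms(1)] by blast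
  then show ?thesis by blast
qed

subsection \<open>Estimating the error of a histogram from samples\<close>

definition sample_err :: "nat \<Rightarrow> (nat \<Rightarrow> real) \<Rightarrow> (nat \<Rightarrow> real) \<Rightarrow> nat list \<Rightarrow> real" where
  "sample_err n P f xs = real n / real (length xs) * sum_list (map (err_term P f) xs)"

text \<open>Errors above 2 need only be estimated up to half their excess over 2: such histograms
  cannot compete with near-optimal ones, since the optimal error is at most 1.\<close>

definition tolerance :: "real \<Rightarrow> real \<Rightarrow> real" where
  "tolerance \<epsilon> e = \<epsilon> / 8 + max 0 (e - 2) / 2"

definition inaccurate_samples ::
    "nat \<Rightarrow> nat \<Rightarrow> real \<Rightarrow> (nat \<Rightarrow> real) \<Rightarrow> (nat \<Rightarrow> real) \<Rightarrow> nat list set" where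
  "inaccurate_samples n m \<epsilon> P f = {xs \<in> samples {1..n} m.
      tolerance \<epsilon> (err n P f) \<le> \<bar>sample_err n P f xs - err n P f\<bar>}"

definition failing_seeds ::
    "nat \<Rightarrow> nat \<Rightarrow> nat \<Rightarrow> real \<Rightarrow> (nat \<Rightarrow> real) \<Rightarrow> (nat \<Rightarrow> real) \<Rightarrow> (nat \<Rightarrow> nat list) set" where
  "failing_seeds n m t \<epsilon> P f = {\<omega> \<in> PiE {..<t} (\<lambda>_. samples {1..n} m).
      real t \<le> 2 * real (card {c\<in>{..<t}. \<omega> c \<in> inaccurate_samples n m \<epsilon> P f})}"

lemma tolerance_pos: "0 < \<epsilon> \<Longrightarrow> 0 < tolerance \<epsilon> e"
  unfolding tolerance_def by (simp add: add_pos_nonneg)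

lemma err_mult_sq_le_tolerance:
  assumes "0 < \<epsilon>" "\<epsilon> < 1" "0 \<le> E"
  shows "E * \<epsilon>\<^sup>2 \<le> 256 * (tolerance \<epsilon> E)\<^sup>2"
proof (cases "E \<le> 4")
  case True
  have "\<epsilon> / 8 \<le> tolerance \<epsilon> E" unfolding tolerance_def by simp
  then have "(\<epsilon> / 8)\<^sup>2 \<le> (tolerance \<epsilon> E)\<^sup>2" using assms(1) by (intro power_mono) auto
  moreover have "E * \<epsilon>\<^sup>2 \<le> 4 * \<epsilon>\<^sup>2" using True by (intro mult_right_mono) auto
  ultimately show ?thesis by (simp add: power_divide)
next
  case False
  then have "tolerance \<epsilon> E = \<epsilon> / 8 + (E - 2) / 2" by (simp add: tolerance_def)
  then have "E / 4 \<le> tolerance \<epsilon> E" using assms(1) False by (simp add: field_simps)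
  then have "(E / 4)\<^sup>2 \<le> (tolerance \<epsilon> E)\<^sup>2" using assms(3) by (intro power_mono) auto
  moreover have "\<epsilon>\<^sup>2 \<le> 1" using assms(1,2) by (simp add: power_le_one)
  then have "E * \<epsilon>\<^sup>2 \<le> E * (16 * E)" using assms(3) False by (intro mult_left_mono) auto
  ultimately show ?thesis by (simp add: power2_eq_square)
qed

lemma card_inaccurate_samples_le:
  assumes "1 \<le> n" "1 \<le> m" "0 < \<epsilon>" "\<epsilon> < 1"
    "\<forall>x\<in>{1..n}. 0 \<le> P x \<and> P x \<le> \<delta>" "\<forall>x\<in>{1..n}. 0 \<le> f x \<and> f x \<le> \<delta>"
    "real n * \<delta> * 4096 \<le> \<epsilon>\<^sup>2 * real m"
  shows "real (card (inaccurate_samples n m \<epsilon> P f)) \<le> real (card (samples {1..n} m)) / 16"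
proof -
  let ?E = "err n P f"
  let ?\<tau> = "tolerance \<epsilon> ?E"
  have a: "0 \<le> err_term P f u \<and> err_term P f u \<le> \<delta>" if "u \<in> {1..n}" for u
  proof -
    have "0 \<le> P u" "P u \<le> \<delta>" "0 \<le> f u" "f u \<le> \<delta>" using assms(5,6) that by auto
    then show ?thesis by (auto simp: err_term_def abs_le_iff)
  qed
  have E: "?E = (\<Sum>u\<in>{1..n}. err_term P f u)" by (rule err_eq_sum_err_term)
  have E0: "0 \<le> ?E" unfolding E using a by (intro sum_nonneg) auto
  have \<tau>0: "0 < ?\<tau>" using tolerance_pos assms(3) by blast
  have "inaccurate_samples n m \<epsilon> P f = {xs\<in>samples {1..n} m.
      ?\<tau> \<le> \<bar>real n / real m * sum_list (map (err_term P f) xs) - (\<Sum>u\<in>{1..n}. err_term P f u)\<bar>}"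
  proof -
    have "sample_err n P f xs = real n / real m * sum_list (map (err_term P f) xs)"
      if "xs \<in> samples {1..n} m" for xs
      using that by (simp add: sample_err_def samples_def)
    then show ?thesis unfolding inaccurate_samples_def by (intro Collect_cong) (auto simp: E)
  qed
  then have "real (card (inaccurate_samples n m \<epsilon> P f)) * ?\<tau>\<^sup>2 \<le> real n ^ m * (real n * \<delta> * ?E / real m)"
    using card_deviating_samples[OF assms(1,2) \<tau>0 a] E by simp
  also have "\<dots> \<le> real n ^ m * (?\<tau>\<^sup>2 / 16)"
  proof (intro mult_left_mono)
    have "real n * \<delta> * ?E / real m = (real n * \<delta> * 4096) * ?E / (4096 * real m)" by simp
    also have "\<dots> \<le> (\<epsilon>\<^sup>2 * real m) * ?E / (4096 * real m)"
      using assms(7) E0 by (intro divide_right_mono mult_right_mono) auto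
    also have "\<dots> = ?E * \<epsilon>\<^sup>2 / 4096" using assms(2) by simp
    also have "\<dots> \<le> ?\<tau>\<^sup>2 / 16" using err_mult_sq_le_tolerance[OF assms(3,4) E0] by simp
    finally show "real n * \<delta> * ?E / real m \<le> ?\<tau>\<^sup>2 / 16" .
  qed simp
  finally have "real (card (inaccurate_samples n m \<epsilon> P f)) * ?\<tau>\<^sup>2 \<le> (real n ^ m / 16) * ?\<tau>\<^sup>2"
    by simp
  then show ?thesis using \<tau>0 by (simp add: mult_le_cancel_right card_samples)
qed

lemma card_failing_seeds_le:
  assumes "1 \<le> n" "1 \<le> m" "0 < \<epsilon>" "\<epsilon> < 1"
    "\<forall>x\<in>{1..n}. 0 \<le> P x \<and> P x \<le> \<delta>" "\<forall>x\<in>{1..n}. 0 \<le> f x \<and> f x \<le> \<delta>"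
    "real n * \<delta> * 4096 \<le> \<epsilon>\<^sup>2 * real m"
  shows "real (card (failing_seeds n m t \<epsilon> P f))
    \<le> real (card (PiE {..<t} (\<lambda>_. samples {1..n} m))) / 2 ^ t"
proof -
  have "real (card (failing_seeds n m t \<epsilon> P f)) \<le> real (card (samples {1..n} m)) ^ t / 2 ^ t"
    unfolding failing_seeds_def
    by (rule card_majority_bad_le[OF finite_samples _ card_inaccurate_samples_le[OF assms]])
      (auto simp: inaccurate_samples_def)
  then show ?thesis by (simp add: card_PiE)
qed

lemma card_Union_failing_seeds_le:
  assumes "1 \<le> n" "1 \<le> m" "0 < \<epsilon>" "\<epsilon> < 1"
    "\<forall>x\<in>{1..n}. 0 \<le> P x \<and> P x \<le> \<delta>" "\<forall>f\<in>C. \<forall>x\<in>{1..n}. 0 \<le> f x \<and> f x \<le> \<delta>"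
    "real n * \<delta> * 4096 \<le> \<epsilon>\<^sup>2 * real m" "finite C" "3 * real (card C) \<le> 2 ^ t"
  shows "real (card (\<Union>f\<in>C. failing_seeds n m t \<epsilon> P f))
    \<le> real (card (PiE {..<t} (\<lambda>_. samples {1..n} m))) / 3"
proof -
  let ?N = "real (card (PiE {..<t} (\<lambda>_. samples {1..n} m)))"
  have "real (card (\<Union>f\<in>C. failing_seeds n m t \<epsilon> P f))
      \<le> (\<Sum>f\<in>C. real (card (failing_seeds n m t \<epsilon> P f)))"
    using card_UN_le[OF assms(8)] of_nat_mono by fastforce
  also have "\<dots> \<le> (\<Sum>f\<in>C. ?N / 2 ^ t)"
    using assms(6) by (intro sum_mono card_failing_seeds_le[OF assms(1-5) _ assms(7)]) blast
  also have "\<dots> = real (card C) * (?N / 2 ^ t)" by simp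
  also have "\<dots> \<le> (2 ^ t / 3) * (?N / 2 ^ t)"
    using assms(9) by (intro mult_right_mono) auto
  also have "\<dots> = ?N / 3" by simp
  finally show ?thesis .
qed

lemma median_sample_err_close:
  assumes "\<omega> \<in> PiE {..<t} (\<lambda>_. samples {1..n} m)" "\<omega> \<notin> failing_seeds n m t \<epsilon> P f"
  shows "\<bar>median t (\<lambda>c. sample_err n P f (\<omega> c)) - err n P f\<bar> \<le> tolerance \<epsilon> (err n P f)"
proof (rule median_close)
  let ?B = "{c\<in>{..<t}. \<omega> c \<in> inaccurate_samples n m \<epsilon> P f}"
  let ?G = "{c\<in>{..<t}. \<bar>sample_err n P f (\<omega> c) - err n P f\<bar> < tolerance \<epsilon> (err n P f)}"
  have "?G = {..<t} - ?B" using assms(1) by (auto simp: inaccurate_samples_def PiE_def Pi_def)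
  moreover have "card ({..<t} - ?B) = t - card ?B" by (subst card_Diff_subset) auto
  ultimately have "card ?G = t - card ?B" by simp
  moreover have "card ?B \<le> t" using card_mono[OF finite_lessThan, of ?B t] by auto
  ultimately have "real (card ?G) = real t - real (card ?B)" by simp
  moreover have "2 * real (card ?B) < real t" using assms by (auto simp: failing_seeds_def)
  ultimately show "real t < 2 * real (card ?G)" by simp
qed

lemma estimate_minimiser_near_optimal:
  assumes "0 < \<epsilon>" "\<epsilon> < 1" "opt \<le> 1"
    and est: "\<And>f. f \<in> C \<Longrightarrow> \<bar>M f - err n P f\<bar> \<le> tolerance \<epsilon> (err n P f)"
    and "f\<^sub>0 \<in> C" "err n P f\<^sub>0 \<le> opt + \<epsilon> / 4"
    and "f \<in> C" "M f \<le> M f\<^sub>0"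
  shows "err n P f \<le> opt + \<epsilon>"
proof -
  have tol: "tolerance \<epsilon> e = (if e \<le> 2 then \<epsilon> / 8 else \<epsilon> / 8 + (e - 2) / 2)" for e
    by (simp add: tolerance_def max_def)
  have "tolerance \<epsilon> (err n P f\<^sub>0) = \<epsilon> / 8"
    using tol[of "err n P f\<^sub>0"] assms(2,3,6) by simp
  then have M0: "M f\<^sub>0 \<le> err n P f\<^sub>0 + \<epsilon> / 8"
    using abs_le_D1[OF est[OF assms(5)]] by linarith
  have Mf: "err n P f - tolerance \<epsilon> (err n P f) \<le> M f"
    using abs_le_D2[OF est[OF assms(7)]] by linarith
  show ?thesis
  proof (cases "err n P f \<le> 2")
    case True
    with tol[of "err n P f"] show ?thesis using M0 Mf assms(1,6,8) by simp
  next
    case False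
    with tol[of "err n P f"] show ?thesis using M0 Mf assms(2,3,6,8) by (simp add: field_simps)
  qed
qed

subsection \<open>The histogram algorithm\<close>

lemma median_cong: "(\<And>c. c < t \<Longrightarrow> v c = v' c) \<Longrightarrow> median t v = median t v'"
  unfolding median_def by (intro arg_cong[where f = Inf] Collect_cong) (simp cong: conj_cong)

lemma sample_err_cong:
  "(\<And>a. a \<in> set xs \<Longrightarrow> P a = Q a) \<Longrightarrow> sample_err n P f xs = sample_err n Q f xs"
  unfolding sample_err_def err_term_def by (intro arg_cong[where f = "(*) _"] arg_cong[where f = sum_list]) simp

lemma seed_items:
  assumes "\<omega> \<in> PiE {..<t} (\<lambda>_. samples U m)"
  shows "length (concat (map \<omega> [0..<t])) = t * m" "set (concat (map \<omega> [0..<t])) \<subseteq> U"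
proof -
  have \<omega>: "\<forall>c<t. length (\<omega> c) = m \<and> set (\<omega> c) \<subseteq> U"
    using assms by (auto simp: samples_def PiE_def Pi_def)
  have "length (concat (map \<omega> [0..<t])) = (\<Sum>c\<leftarrow>[0..<t]. length (\<omega> c))"
    by (simp add: length_concat o_def)
  also have "\<dots> = (\<Sum>c\<leftarrow>[0..<t]. m)" using \<omega> by (intro arg_cong[where f = sum_list] map_cong) auto
  finally show "length (concat (map \<omega> [0..<t])) = t * m" by (simp add: sum_list_triv)
  show "set (concat (map \<omega> [0..<t])) \<subseteq> U" using \<omega> by auto
qed

definition sketch_err_estimate :: "nat \<Rightarrow> nat \<Rightarrow> nat \<Rightarrow> nat list \<Rightarrow> (nat \<Rightarrow> real) \<Rightarrow> real" where
  "sketch_err_estimate n m t st f =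
     median t (\<lambda>c. sample_err n (sketch_freq st) f (chunks m (sketch_items st) ! c))"

lemma sketch_err_estimate_sample_sketch:
  assumes "\<forall>u\<in>set s. fst u \<in> {1..n}" "0 < m" "\<omega> \<in> PiE {..<t} (\<lambda>_. samples U m)"
  shows "sketch_err_estimate n m t (sample_sketch (concat (map \<omega> [0..<t])) s) f
    = median t (\<lambda>c. sample_err n (pvec n s) f (\<omega> c))"
proof -
  let ?st = "sample_sketch (concat (map \<omega> [0..<t])) s"
  have "chunks m (sketch_items ?st) = map \<omega> [0..<t]"
    using assms(2,3) by (auto simp: sketch_items_sample_sketch samples_def PiE_def Pi_def
        intro!: chunks_concat)
  moreover have "sample_err n (sketch_freq ?st) f (\<omega> c) = sample_err n (pvec n s) f (\<omega> c)"
    if "c < t" for c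
    using that by (intro sample_err_cong sketch_freq_sample_sketch[OF assms(1)]) auto
  ultimately show ?thesis unfolding sketch_err_estimate_def by (intro median_cong) simp
qed

definition hist_alg :: "nat \<Rightarrow> nat \<Rightarrow> nat \<Rightarrow> nat \<Rightarrow> (nat \<Rightarrow> real) set \<Rightarrow> salg" where
  "hist_alg n m t w C = sketch_alg w (pmf_of_set (PiE {..<t} (\<lambda>_. samples {1..n} m)))
     (\<lambda>\<omega>. sample_sketch (concat (map \<omega> [0..<t])) []) sketch_update
     (\<lambda>st. arg_min_on (sketch_err_estimate n m t st) C)"

lemma finite_seeds: "finite (PiE {..<t::nat} (\<lambda>_. samples {1..n::nat} m))"
  by (rule finite_PiE) (simp_all add: finite_samples)

lemma seeds_nonempty:
  fixes n t :: nat
  assumes "1 \<le> n"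
  shows "PiE {..<t} (\<lambda>_. samples {1..n} m) \<noteq> {}"
proof -
  have "replicate m 1 \<in> samples {1..n} m" using assms by (auto simp: samples_def)
  then show ?thesis by (auto simp: PiE_eq_empty_iff)
qed

lemma set_pmf_seeds:
  fixes n t :: nat
  assumes "1 \<le> n"
  shows "set_pmf (pmf_of_set (PiE {..<t} (\<lambda>_. samples {1..n} m))) = PiE {..<t} (\<lambda>_. samples {1..n} m)"
  by (rule set_pmf_of_set[OF seeds_nonempty[OF assms] finite_seeds])

lemma sketch_hist_alg:
  assumes "1 \<le> n" "0 < w" "n < 2 ^ w" "L < 2 ^ w"
  shows "sketch w L (pmf_of_set (PiE {..<t} (\<lambda>_. samples {1..n} m)))
    (\<lambda>\<omega>. sample_sketch (concat (map \<omega> [0..<t]))) sketch_update"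
proof
  show "\<forall>x\<in>set (sample_sketch (concat (map \<omega> [0..<t])) s). x < 2 ^ w"
    if "\<omega> \<in> set_pmf (pmf_of_set (PiE {..<t} (\<lambda>_. samples {1..n} m)))" "length s \<le> L" for \<omega> s
    using that assms seed_items(2)[of \<omega> t "{1..n}" m] set_pmf_seeds
    by (intro sample_sketch_less) auto
qed (use assms(2) sample_sketch_snoc in auto)

lemma exists_grid_hist_near_opt:
  assumes "1 \<le> k" "0 < \<epsilon>" "0 < h" "0 \<le> \<delta>" "real n * h \<le> \<epsilon> / 8"
    "\<forall>x\<in>{1..n}. 0 \<le> P x \<and> P x \<le> \<delta>"
  shows "\<exists>f\<in>grid_hists n k h (nat \<lfloor>\<delta> / h\<rfloor>). err n P f \<le> opt_err n k P + \<epsilon> / 4"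
proof -
  obtain f where "f \<in> hist_set n k" "err n P f < opt_err n k P + \<epsilon> / 8"
    using near_optimal_hist[OF assms(1), of "\<epsilon> / 8" n P] assms(2) by auto
  moreover obtain f' where "f' \<in> grid_hists n k h (nat \<lfloor>\<delta> / h\<rfloor>)" "err n P f' \<le> err n P f + real n * h"
    using grid_hist_near[OF assms(3,4,6) \<open>f \<in> hist_set n k\<close>] by blast
  ultimately show ?thesis using assms(5) by (intro bexI[of _ f']) auto
qed

lemma arg_min_median_near_optimal:
  assumes "0 < \<epsilon>" "\<epsilon> < 1" "opt \<le> 1" "finite C" "f\<^sub>0 \<in> C" "err n P f\<^sub>0 \<le> opt + \<epsilon> / 4"
    "\<omega> \<in> PiE {..<t} (\<lambda>_. samples {1..n} m)" "\<omega> \<notin> (\<Union>f\<in>C. failing_seeds n m t \<epsilon> P f)"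
  defines "M \<equiv> \<lambda>f. median t (\<lambda>c. sample_err n P f (\<omega> c))"
  shows "arg_min_on M C \<in> C" "err n P (arg_min_on M C) \<le> opt + \<epsilon>"
proof -
  have ne: "C \<noteq> {}" using assms(5) by auto
  then show mem: "arg_min_on M C \<in> C" using arg_min_if_finite(1) assms(4) by blast
  show "err n P (arg_min_on M C) \<le> opt + \<epsilon>"
  proof (rule estimate_minimiser_near_optimal[OF assms(1-3) _ assms(5,6) mem])
    show "\<bar>M f - err n P f\<bar> \<le> tolerance \<epsilon> (err n P f)" if "f \<in> C" for f
      unfolding M_def using that assms(7,8) by (intro median_sample_err_close) auto
    show "M (arg_min_on M C) \<le> M f\<^sub>0" by (rule arg_min_least[OF assms(4) ne assms(5)])
  qed
qed

lemma prob_pmf_of_set_Diff_ge: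
  assumes "finite A" "A \<noteq> {}" "B \<subseteq> A" "3 * real (card B) \<le> real (card A)"
  shows "2 / 3 \<le> measure_pmf.prob (pmf_of_set A) (A - B)"
proof -
  have "finite B" using assms(1,3) finite_subset by blast
  then have "card (A - B) = card A - card B" "card B \<le> card A"
    using assms(1,3) by (simp_all add: card_Diff_subset card_mono)
  then have "2 / 3 * real (card A) \<le> real (card (A - B))" using assms(4) by simp
  moreover have "0 < real (card A)" using assms(1,2) by (simp add: card_gt_0_iff)
  ultimately show ?thesis
    using assms(1,2) by (simp add: measure_pmf_of_set Int_absorb1 field_simps)
qed

lemma alg_output_hist_alg:
  assumes "1 \<le> n" "1 \<le> m" "0 < w" "n < 2 ^ w" "length s < 2 ^ w" "valid_stream n s"
  shows "alg_output (hist_alg n m t w C) s = map_pmf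
    (\<lambda>\<omega>. arg_min_on (\<lambda>f. median t (\<lambda>c. sample_err n (pvec n s) f (\<omega> c))) C)
    (pmf_of_set (PiE {..<t} (\<lambda>_. samples {1..n} m)))"
proof -
  interpret sketch w "length s" "pmf_of_set (PiE {..<t} (\<lambda>_. samples {1..n} m))"
    "\<lambda>\<omega>. sample_sketch (concat (map \<omega> [0..<t]))" sketch_update
    using sketch_hist_alg assms(1,3-5) .
  have items: "\<forall>u\<in>set s. fst u \<in> {1..n}" using assms(6) by (simp add: valid_stream_def)
  have "sketch_err_estimate n m t (sample_sketch (concat (map \<omega> [0..<t])) s)
      = (\<lambda>f. median t (\<lambda>c. sample_err n (pvec n s) f (\<omega> c)))"
    if "\<omega> \<in> set_pmf (pmf_of_set (PiE {..<t} (\<lambda>_. samples {1..n} m)))" for \<omega>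
  proof
    fix f
    have "0 < m" using assms(2) by simp
    moreover have "\<omega> \<in> PiE {..<t} (\<lambda>_. samples {1..n} m)" using that set_pmf_seeds[OF assms(1)] by simp
    ultimately show "sketch_err_estimate n m t (sample_sketch (concat (map \<omega> [0..<t])) s) f
        = median t (\<lambda>c. sample_err n (pvec n s) f (\<omega> c))"
      by (rule sketch_err_estimate_sample_sketch[OF items])
  qed
  then show ?thesis
    unfolding hist_alg_def alg_output_sketch_alg[OF order_refl] by (intro pmf.map_cong refl) simp
qed

lemma hist_alg_correct:
  fixes n m k t w L :: nat and \<epsilon> h \<delta> :: real
  defines "C \<equiv> grid_hists n k h (nat \<lfloor>\<delta> / h\<rfloor>)"
  assumes "1 \<le> n" "1 \<le> m" "1 \<le> k" "0 < \<epsilon>" "\<epsilon> < 1" "0 < h" "0 \<le> \<delta>" "real n * h \<le> \<epsilon> / 8"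
    "real n * \<delta> * 4096 \<le> \<epsilon>\<^sup>2 * real m" "3 * real (card C) \<le> 2 ^ t"
    "0 < w" "n < 2 ^ w" "L < 2 ^ w"
    and s: "valid_stream n s" "length s \<le> L" "0 < mtot n s" "\<forall>i\<in>{1..n}. pvec n s i \<le> \<delta>"
  shows "2 / 3 \<le> measure_pmf.prob (alg_output (hist_alg n m t w C) s)
     {f. f \<in> hist_set n k \<and> err n (pvec n s) f \<le> opt_err n k (pvec n s) + \<epsilon>}"
proof -
  define \<Omega> where "\<Omega> = PiE {..<t} (\<lambda>_. samples {1..n} m)"
  define P where "P = pvec n s"
  define opt where "opt = opt_err n k P"
  define Fail where "Fail = (\<Union>f\<in>C. failing_seeds n m t \<epsilon> P f)"
  have finC: "finite C" unfolding C_def by (rule finite_grid_hists)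
  have P: "\<forall>x\<in>{1..n}. 0 \<le> P x \<and> P x \<le> \<delta>" using pvec_nonneg[OF s(1,3)] s(4) by (simp add: P_def)
  have opt: "opt \<le> 1"
    unfolding opt_def P_def using opt_err_le_1 assms(4) pvec_nonneg[OF s(1,3)] sum_pvec[OF s(3)] by blast
  obtain f\<^sub>0 where f\<^sub>0: "f\<^sub>0 \<in> C" "err n P f\<^sub>0 \<le> opt + \<epsilon> / 4"
    using exists_grid_hist_near_opt[OF assms(4,5,7,8,9) P] by (auto simp: C_def opt_def)
  have "real (card Fail) \<le> real (card \<Omega>) / 3"
    unfolding Fail_def \<Omega>_def
    using card_Union_failing_seeds_le[OF assms(2,3,5,6) P _ assms(10) finC assms(11)]
      grid_hists_bounded[OF assms(7,8)] by (auto simp: C_def)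
  moreover have "Fail \<subseteq> \<Omega>" by (auto simp: Fail_def failing_seeds_def \<Omega>_def)
  ultimately have "2 / 3 \<le> measure_pmf.prob (pmf_of_set \<Omega>) (\<Omega> - Fail)"
    unfolding \<Omega>_def using finite_seeds seeds_nonempty assms(2) by (intro prob_pmf_of_set_Diff_ge) auto
  also have "\<dots> \<le> measure_pmf.prob (alg_output (hist_alg n m t w C) s)
      {f. f \<in> hist_set n k \<and> err n P f \<le> opt + \<epsilon>}"
  proof -
    let ?out = "\<lambda>\<omega>. arg_min_on (\<lambda>f. median t (\<lambda>c. sample_err n P f (\<omega> c))) C"
    have "\<Omega> - Fail \<subseteq> ?out -` {f. f \<in> hist_set n k \<and> err n P f \<le> opt + \<epsilon>}"
    proof
      fix \<omega> assume "\<omega> \<in> \<Omega> - Fail"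
      then have "\<omega> \<in> \<Omega>" "\<omega> \<notin> Fail" by simp_all
      note near = arg_min_median_near_optimal[OF assms(5,6) opt finC f\<^sub>0 this[unfolded \<Omega>_def Fail_def]]
      have "C \<subseteq> hist_set n k" by (auto simp: C_def grid_hists_def)
      then show "\<omega> \<in> ?out -` {f. f \<in> hist_set n k \<and> err n P f \<le> opt + \<epsilon>}" using near by auto
    qed
    then show ?thesis
      unfolding alg_output_hist_alg[OF assms(2,3,12,13) le_less_trans[OF s(2) assms(14)] s(1)]
        \<Omega>_def[symmetric] P_def[symmetric] measure_map_pmf
      by (rule measure_pmf.finite_measure_mono) simp
  qed
  finally show ?thesis by (simp add: P_def opt_def)
qed

subsection \<open>Choice of the parameters\<close>

lemma ceiling_log2_bounds:
  fixes n :: nat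
  assumes "2 \<le> n"
  defines "b \<equiv> nat \<lceil>log 2 (real n + 2)\<rceil>"
  shows "real n + 2 \<le> 2 ^ b" "1 \<le> b" "real b \<le> 6 * ln (real n)"
proof -
  have l0: "0 \<le> log 2 (real n + 2)" by simp
  have rb: "real b = of_int \<lceil>log 2 (real n + 2)\<rceil>" using l0 by (simp add: b_def)
  have "log 2 (real n + 2) \<le> real b" using rb by simp
  then have "2 powr log 2 (real n + 2) \<le> 2 powr real b" by (intro powr_mono) auto
  then show "real n + 2 \<le> 2 ^ b" by (simp add: powr_realpow)
  have "1 \<le> log 2 (real n + 2)" using assms by simp
  then show "1 \<le> b" using rb by linarith
  have ln2: "1/2 \<le> ln (2::real)" using ln2_ge_two_thirds by linarith
  have lnn: "ln 2 \<le> ln (real n)" using assms by simp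
  have "log 2 (real n + 2) \<le> log 2 (2 * real n)" using assms by simp
  also have "\<dots> = log 2 2 + log 2 (real n)" using assms by (simp add: log_mult)
  also have "\<dots> = 1 + ln (real n) / ln 2" by (simp add: log_def)
  finally have "real b \<le> 2 + ln (real n) / ln 2" using rb by linarith
  also have "ln (real n) / ln 2 \<le> 2 * ln (real n)"
    using ln2 lnn by (simp add: field_simps)
  finally show "real b \<le> 6 * ln (real n)" using ln2 lnn by linarith
qed

lemma ln_le_space_bound:
  fixes n k :: nat and \<alpha> \<epsilon> :: real
  assumes "2 \<le> n" "1 \<le> k" "\<alpha> < 1" "0 < \<epsilon>" "\<epsilon> < 1"
  defines "X \<equiv> real n powr (1 - \<alpha>) * real k * ln (real n / \<epsilon>)"
  shows "real k * real n powr (1 - \<alpha>) * ln (real n) \<le> X"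
    and "ln (real n) \<le> 2 * ln (X + 2) / (1 - \<alpha>)"
proof -
  define y where "y = real n powr (1 - \<alpha>)"
  define l where "l = ln (real n)"
  have y1: "1 \<le> y" unfolding y_def using assms by (intro ge_one_powr_ge_zero) auto
  have "ln 2 \<le> l" unfolding l_def using assms(1) by simp
  then have l2: "1 / 2 \<le> l" using ln2_ge_two_thirds by linarith
  have "l \<le> ln (real n / \<epsilon>)" unfolding l_def using assms(1,4,5) by (simp add: ln_div)
  then show kyl: "real k * y * l \<le> X"
    unfolding X_def y_def[symmetric] using y1 assms(2) by (simp add: mult.commute mult_left_mono)
  have "y * (1 / 2) \<le> y * (real k * l)"
    using y1 l2 assms(2) mult_mono[of 1 "real k" "1/2" l] by (intro mult_left_mono) auto
  then have "y / 2 + 2 \<le> X + 2" using kyl by (simp add: mult.commute mult.left_commute)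
  then have "ln (y / 2 + 2) \<le> ln (X + 2)" using y1 by simp
  moreover have "ln y \<le> 2 * ln (y / 2 + 2)"
  proof -
    have "y \<le> (y / 2 + 2)\<^sup>2" using y1 by (simp add: power2_eq_square algebra_simps)
    then have "ln y \<le> ln ((y / 2 + 2)\<^sup>2)" using y1 by simp
    then show ?thesis using y1 by (simp add: ln_realpow)
  qed
  moreover have "ln y = (1 - \<alpha>) * l" unfolding y_def l_def using assms(1) by simp
  ultimately have "(1 - \<alpha>) * l \<le> 2 * ln (X + 2)" by linarith
  then show "l \<le> 2 * ln (X + 2) / (1 - \<alpha>)" using assms(3) by (simp add: field_simps)
qed

lemma sketch_space_le:
  fixes n k d b m t :: nat and \<alpha> \<epsilon> :: real
  assumes "2 \<le> n" "1 \<le> k" "\<alpha> < 1" "0 < \<epsilon>" "\<epsilon> < 1"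
    "1 \<le> b" "real b \<le> 6 * ln (real n)" "1 \<le> m" "real m \<le> 4097 * real n powr (1 - \<alpha>)"
    "t = (k + 1) * (2 * b + 3) + 2"
  defines "X \<equiv> real n powr (1 - \<alpha>) * real k * ln (real n / \<epsilon>)"
  shows "real (b * (d + 1) * (2 + 3 * (t * m))) \<le> (real (d + 1) * 17699040 / (1 - \<alpha>)) * X * ln (X + 2)"
proof -
  define y where "y = real n powr (1 - \<alpha>)"
  define l where "l = ln (real n)"
  note kyl = ln_le_space_bound(1)[OF assms(1-5), folded X_def y_def l_def]
  note l_le = ln_le_space_bound(2)[OF assms(1-5), folded X_def l_def]
  have y1: "1 \<le> y" unfolding y_def using assms by (intro ge_one_powr_ge_zero) auto
  have l0: "0 \<le> l" unfolding l_def using assms(1) by simp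
  have t12: "t \<le> 12 * k * b"
  proof -
    have "(k + 1) * (2 * b + 3) \<le> (2 * k) * (5 * b)" using assms(2,6) by (intro mult_mono) auto
    moreover have "1 \<le> k * b" using assms(2,6) by simp
    ultimately show ?thesis using assms(10) by (simp add: algebra_simps)
  qed
  have "1 \<le> t * m" using assms(8,10) by simp
  then have "2 + 3 * (t * m) \<le> 5 * t * m" by simp
  then have "real (b * (d + 1) * (2 + 3 * (t * m))) \<le> real (b * (d + 1) * (5 * t * m))"
    by (intro of_nat_mono mult_le_mono2)
  also have "\<dots> = real (d + 1) * 5 * real b * real t * real m" by (simp add: algebra_simps)
  also have "\<dots> \<le> real (d + 1) * 5 * real b * (12 * real k * real b) * (4097 * y)"
  proof -
    have "real t \<le> 12 * real k * real b" using t12 by (metis of_nat_le_iff of_nat_mult of_nat_numeral)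
    then show ?thesis using assms(9) unfolding y_def by (intro mult_mono mult_left_mono) auto
  qed
  also have "\<dots> = real (d + 1) * 245820 * (real k * y) * (real b)\<^sup>2" by (simp add: power2_eq_square)
  also have "\<dots> \<le> real (d + 1) * 245820 * (real k * y) * (36 * l\<^sup>2)"
  proof -
    have "(real b)\<^sup>2 \<le> (6 * l)\<^sup>2" using assms(7) unfolding l_def by (intro power_mono) auto
    then show ?thesis using y1 by (intro mult_left_mono) (auto simp: power_mult_distrib)
  qed
  also have "\<dots> = real (d + 1) * 8849520 * (real k * y * l) * l" by (simp add: power2_eq_square)
  also have "\<dots> \<le> real (d + 1) * 8849520 * X * (2 * ln (X + 2) / (1 - \<alpha>))"
  proof -
    have "0 \<le> real k * y * l" using l0 y1 by simp
    then have "0 \<le> X" using kyl by linarith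
    then show ?thesis using kyl l_le l0 y1 by (intro mult_mono mult_left_mono) auto
  qed
  also have "\<dots> = (real (d + 1) * 17699040 / (1 - \<alpha>)) * X * ln (X + 2)" by simp
  finally show ?thesis .
qed

lemma card_grid_hists_le_pow2:
  assumes "J \<le> 8 * n" "n + 2 \<le> 2 ^ b" "t = (k + 1) * (2 * b + 3) + 2"
  shows "3 * real (card (grid_hists n k h J)) \<le> 2 ^ t"
proof -
  have "(n + 1) * (J + 1) \<le> 8 * ((n + 1) * (n + 1))"
    using assms(1) mult_le_mono2[of "J + 1" "8 * (n + 1)" "n + 1"] by (simp add: algebra_simps)
  also have "\<dots> \<le> 8 * (2 ^ b * 2 ^ b)" using assms(2) by (intro mult_le_mono2 mult_le_mono) auto
  also have "\<dots> = 2 ^ (2 * b + 3)" by (simp only: mult_2 power_add) simp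
  finally have base: "(n + 1) * (J + 1) \<le> 2 ^ (2 * b + 3)" .
  have "card (grid_hists n k h J) \<le> ((n + 1) * (J + 1)) ^ (k + 1)" by (rule card_grid_hists_le)
  also have "\<dots> \<le> (2 ^ (2 * b + 3)) ^ (k + 1)" using base by (rule power_mono) simp
  also have "\<dots> = 2 ^ ((2 * b + 3) * (k + 1))" by (rule power_mult[symmetric])
  finally have "card (grid_hists n k h J) \<le> 2 ^ ((2 * b + 3) * (k + 1))" .
  then have "3 * card (grid_hists n k h J) \<le> 3 * 2 ^ ((2 * b + 3) * (k + 1))" by simp
  also have "\<dots> \<le> 2 ^ t"
  proof -
    have "(2::nat) ^ t = 2 ^ ((2 * b + 3) * (k + 1)) * 2 ^ 2"
      unfolding assms(3) by (simp only: power_add mult.commute[of "k + 1"])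
    then show ?thesis by simp
  qed
  finally show ?thesis by (metis of_nat_le_iff of_nat_mult of_nat_numeral of_nat_power)
qed

lemma width_bounds:
  fixes n b d :: nat
  assumes "n + 2 \<le> 2 ^ b" "1 \<le> b"
  shows "0 < b * (d + 1)" "n < 2 ^ (b * (d + 1))" "(n + 1) ^ d < 2 ^ (b * (d + 1))"
proof -
  show "0 < b * (d + 1)" using assms(2) by simp
  have "(n + 1) ^ d \<le> (n + 2) ^ d" by (intro power_mono) auto
  also have "\<dots> < (n + 2) ^ (d + 1)" by (intro power_strict_increasing) auto
  also have "\<dots> \<le> 2 ^ (b * (d + 1))" unfolding power_mult using assms(1) by (intro power_mono) auto
  finally show "(n + 1) ^ d < 2 ^ (b * (d + 1))" .
  have "2 ^ b \<le> (2::nat) ^ (b * (d + 1))" by (intro power_increasing) auto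
  then show "n < 2 ^ (b * (d + 1))" using assms(1) by linarith
qed

lemma sample_size_bounds:
  fixes n :: nat and \<alpha> \<epsilon> :: real
  assumes "1 \<le> n" "\<alpha> < 1"
  defines "m \<equiv> nat \<lceil>4096 * real n powr (1 - \<alpha>)\<rceil>"
  shows "1 \<le> m" "real m \<le> 4097 * real n powr (1 - \<alpha>)"
    "real n * (\<epsilon>\<^sup>2 / real n powr \<alpha>) * 4096 \<le> \<epsilon>\<^sup>2 * real m"
proof -
  have "1 \<le> real n powr (1 - \<alpha>)" using assms by (intro ge_one_powr_ge_zero) auto
  then have m: "4096 * real n powr (1 - \<alpha>) \<le> real m"
    and "1 \<le> m" "real m \<le> 4097 * real n powr (1 - \<alpha>)"
    unfolding m_def by linarith+
  then show "1 \<le> m" "real m \<le> 4097 * real n powr (1 - \<alpha>)" by simp_all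
  have "real n * (\<epsilon>\<^sup>2 / real n powr \<alpha>) * 4096 = \<epsilon>\<^sup>2 * (4096 * real n powr (1 - \<alpha>))"
    using assms(1) by (simp add: powr_diff)
  also have "\<dots> \<le> \<epsilon>\<^sup>2 * real m" using m by (intro mult_left_mono) auto
  finally show "real n * (\<epsilon>\<^sup>2 / real n powr \<alpha>) * 4096 \<le> \<epsilon>\<^sup>2 * real m" .
qed

lemma grid_size_bound:
  fixes n :: nat and \<alpha> \<epsilon> :: real
  assumes "1 \<le> n" "0 < \<alpha>" "0 < \<epsilon>" "\<epsilon> < 1"
  shows "nat \<lfloor>(\<epsilon>\<^sup>2 / real n powr \<alpha>) / (\<epsilon> / (8 * real n))\<rfloor> \<le> 8 * n"
proof -
  have n_pow: "1 \<le> real n powr \<alpha>" using assms by (intro ge_one_powr_ge_zero) auto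
  have "(\<epsilon>\<^sup>2 / real n powr \<alpha>) / (\<epsilon> / (8 * real n)) = 8 * real n * \<epsilon> / real n powr \<alpha>"
    using assms(1,3) by (simp add: power2_eq_square field_simps)
  also have "\<dots> \<le> 8 * real n * \<epsilon>"
    using n_pow assms(3) by (simp add: divide_le_eq mult_le_cancel_left1 field_simps)
  also have "\<dots> \<le> 8 * real n" using assms(4) by (simp add: mult_left_le)
  finally show ?thesis by linarith
qed

lemma histogram_algorithm:
  fixes n k d :: nat and \<alpha> \<epsilon> :: real
  assumes "0 < \<alpha>" "\<alpha> < 1" "2 \<le> n" "1 \<le> k" "0 < \<epsilon>" "\<epsilon> < 1"
  defines "X \<equiv> real n powr (1 - \<alpha>) * real k * ln (real n / \<epsilon>)"
  shows "\<exists>A. space_bounded A n ((n + 1) ^ d) (real (d + 1) * 17699040 / (1 - \<alpha>) * X * ln (X + 2)) \<and>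
    (\<forall>s. valid_stream n s \<and> length s \<le> (n + 1) ^ d \<and> 0 < mtot n s \<and>
         (\<forall>i\<in>{1..n}. pvec n s i \<le> \<epsilon>\<^sup>2 / real n powr \<alpha>) \<longrightarrow>
       2 / 3 \<le> measure_pmf.prob (alg_output A s)
         {f. f \<in> hist_set n k \<and> err n (pvec n s) f \<le> opt_err n k (pvec n s) + \<epsilon>})"
proof -
  define \<delta> where "\<delta> = \<epsilon>\<^sup>2 / real n powr \<alpha>"
  define h where "h = \<epsilon> / (8 * real n)"
  define b where "b = nat \<lceil>log 2 (real n + 2)\<rceil>"
  define m where "m = nat \<lceil>4096 * real n powr (1 - \<alpha>)\<rceil>"
  define t where "t = (k + 1) * (2 * b + 3) + 2"
  define w where "w = b * (d + 1)"
  define C where "C = grid_hists n k h (nat \<lfloor>\<delta> / h\<rfloor>)"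
  note b = ceiling_log2_bounds[OF assms(3), folded b_def]
  have pow_b: "n + 2 \<le> 2 ^ b" using b(1) by (metis of_nat_le_iff of_nat_add of_nat_numeral of_nat_power)
  note w = width_bounds[where d = d, OF pow_b b(2), folded w_def]
  have n: "1 \<le> n" using assms(3) by simp
  note m = sample_size_bounds(1,2)[OF n assms(2), folded m_def]
  have n\<delta>: "real n * \<delta> * 4096 \<le> \<epsilon>\<^sup>2 * real m"
    unfolding \<delta>_def m_def by (rule sample_size_bounds(3)[OF n assms(2)])
  have J: "nat \<lfloor>\<delta> / h\<rfloor> \<le> 8 * n" unfolding \<delta>_def h_def using assms by (intro grid_size_bound) auto
  interpret sketch w "(n + 1) ^ d" "pmf_of_set (PiE {..<t} (\<lambda>_. samples {1..n} m))"
    "\<lambda>\<omega>. sample_sketch (concat (map \<omega> [0..<t]))" sketch_update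
    using sketch_hist_alg assms(3) w by simp
  show ?thesis
  proof (intro exI[of _ "hist_alg n m t w C"] conjI allI impI)
    show "space_bounded (hist_alg n m t w C) n ((n + 1) ^ d)
        (real (d + 1) * 17699040 / (1 - \<alpha>) * X * ln (X + 2))"
      unfolding hist_alg_def
    proof (rule space_bounded_sketch_alg)
      show "length (sample_sketch (concat (map \<omega> [0..<t])) s) = 2 + 3 * (t * m)"
        if "\<omega> \<in> set_pmf (pmf_of_set (PiE {..<t} (\<lambda>_. samples {1..n} m)))" for \<omega> s
        using that seed_items(1) set_pmf_seeds assms(3) by (auto simp: length_sample_sketch)
      show "real (w * (2 + 3 * (t * m))) \<le> real (d + 1) * 17699040 / (1 - \<alpha>) * X * ln (X + 2)"
        unfolding w_def X_def by (rule sketch_space_le[OF assms(3,4,2,5,6) b(2,3) m(1,2) t_def])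
    qed
    fix s
    assume "valid_stream n s \<and> length s \<le> (n + 1) ^ d \<and> 0 < mtot n s \<and>
      (\<forall>i\<in>{1..n}. pvec n s i \<le> \<epsilon>\<^sup>2 / real n powr \<alpha>)"
    moreover have "0 < h" "real n * h \<le> \<epsilon> / 8" using assms(3,5) by (simp_all add: h_def)
    ultimately show "2 / 3 \<le> measure_pmf.prob (alg_output (hist_alg n m t w C) s)
        {f. f \<in> hist_set n k \<and> err n (pvec n s) f \<le> opt_err n k (pvec n s) + \<epsilon>}"
      unfolding C_def using n assms(4-6) m(1) n\<delta> card_grid_hists_le_pow2[OF J pow_b t_def] w
      by (intro hist_alg_correct[where L = "(n + 1) ^ d"]) (auto simp: \<delta>_def)
  qed
qed

definition constant_alg :: salg where
  "constant_alg = \<lparr>s_init = return_pmf [], s_upd = (\<lambda>_ _. return_pmf []), s_out = (\<lambda>_. return_pmf (\<lambda>_. 0))\<rparr>"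

lemma space_bounded_constant_alg: "0 \<le> S \<Longrightarrow> space_bounded constant_alg n L S"
proof -
  have "run constant_alg s = return_pmf []" for s
    by (induction s rule: rev_induct) (simp_all add: run_def constant_alg_def)
  then show "0 \<le> S \<Longrightarrow> space_bounded constant_alg n L S" by (simp add: space_bounded_def)
qed

lemma single_item_promise_infeasible:
  assumes "0 < mtot 1 s" "\<epsilon> < 1" "0 < \<epsilon>"
  shows "\<not> pvec 1 s 1 \<le> \<epsilon>\<^sup>2 / real 1 powr \<alpha>"
proof -
  have "pvec 1 s 1 = 1" using sum_pvec[OF assms(1)] by simp
  moreover have "\<epsilon>\<^sup>2 < 1" using assms(2,3) by (simp add: power_less_one_iff)
  ultimately show ?thesis by simp
qed

theorem mainTheorem3:
  fixes \<alpha> :: real and d :: nat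
  assumes "0 < \<alpha>" and "\<alpha> < 1"
  shows "\<exists>C c :: real. 0 < C \<and>
    (\<forall>(n::nat) (k::nat) (\<epsilon>::real). 1 \<le> n \<longrightarrow> 1 \<le> k \<longrightarrow> 0 < \<epsilon> \<longrightarrow> \<epsilon> < 1 \<longrightarrow>
      (let X = real n powr (1 - \<alpha>) * real k * ln (real n / \<epsilon>) in
       \<exists>A :: salg.
         space_bounded A n ((n + 1) ^ d) (C * X * ln (X + 2) powr c) \<and>
         (\<forall>s. valid_stream n s \<and> length s \<le> (n + 1) ^ d \<and> 0 < mtot n s \<and>
              (\<forall>i\<in>{1..n}. pvec n s i \<le> \<epsilon>\<^sup>2 / real n powr \<alpha>) \<longrightarrow>
            2 / 3 \<le> measure_pmf.prob (alg_output A s)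
                 {f. f \<in> hist_set n k \<and> err n (pvec n s) f \<le> opt_err n k (pvec n s) + \<epsilon>})))"
proof (rule exI[of _ "real (d + 1) * 17699040 / (1 - \<alpha>)"], rule exI[of _ 1], intro conjI allI impI)
  show "0 < real (d + 1) * 17699040 / (1 - \<alpha>)" using assms by simp
  fix n k :: nat and \<epsilon> :: real
  assume n: "1 \<le> n" and k: "1 \<le> k" and \<epsilon>: "0 < \<epsilon>" "\<epsilon> < 1"
  define X where "X = real n powr (1 - \<alpha>) * real k * ln (real n / \<epsilon>)"
  have "0 < ln (real n / \<epsilon>)" using n \<epsilon> by (simp add: field_simps)
  then have "0 \<le> X" by (simp add: X_def)
  then have lnX: "ln (X + 2) powr 1 = ln (X + 2)" and "0 \<le> real (d + 1) * 17699040 / (1 - \<alpha>) * X * ln (X + 2)"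
    using assms(2) by simp_all
  show "let X = real n powr (1 - \<alpha>) * real k * ln (real n / \<epsilon>) in \<exists>A.
      space_bounded A n ((n + 1) ^ d) (real (d + 1) * 17699040 / (1 - \<alpha>) * X * ln (X + 2) powr 1) \<and>
      (\<forall>s. valid_stream n s \<and> length s \<le> (n + 1) ^ d \<and> 0 < mtot n s \<and>
           (\<forall>i\<in>{1..n}. pvec n s i \<le> \<epsilon>\<^sup>2 / real n powr \<alpha>) \<longrightarrow>
         2 / 3 \<le> measure_pmf.prob (alg_output A s)
           {f. f \<in> hist_set n k \<and> err n (pvec n s) f \<le> opt_err n k (pvec n s) + \<epsilon>})"
  proof (cases "n = 1")
    \<comment> \<open>the parameter choice needs \<open>ln n > 0\<close>, but for \<open>n = 1\<close> the promise
      \<open>p 1 \<le> \<epsilon>\<^sup>2 < 1 = p 1\<close> is infeasible\<close>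
    case True
    then show ?thesis
      unfolding Let_def X_def[symmetric] lnX using \<open>0 \<le> _ * X * ln (X + 2)\<close> single_item_promise_infeasible[OF _ \<epsilon>(2,1)]
      by (intro exI[of _ constant_alg] conjI space_bounded_constant_alg allI impI) auto
  next
    case False
    then show ?thesis
      unfolding Let_def X_def[symmetric] lnX using histogram_algorithm[OF assms _ k \<epsilon>] n by (simp add: X_def)
  qed
qed

end
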